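(* Let $n$ be the number of workers, let $p,k_A,k_B$ be positive integers, and let $q$ be an odd integer with $q\ge n>2k_Ak_Bp-1$; $\theta=2\pi/q$. Let $\mathbf{A}\in\mathbb{R}^{t\times r}$ be partitioned into $2p$ block-rows and $k_A$ block-columns, with blocks $\mathbf{A}_{(\langle i,l\rangle,j)}$, $i\in\{0,\dots,p-1\}$, $l\in\{0,1\}$, $j\in\{0,\dots,k_A-1\}$, and $\mathbf{B}\in\mathbb{R}^{t\times w}$ into $2p$ block-rows and $k_B$ block-columns, blocks $\mathbf{B}_{(\langle i,l\rangle,j)}$; each block has $\zeta=t/(2p)$ rows. Worker $k\in\{0,\dots,n-1\}$ stores $$\hat{\mathbf{A}}_k=\sum_{i=0}^{p-1}\sum_{j=0}^{k_A-1}\big(\mathbf{R}_{-\theta}^{k((j-1)p+i+1)}\otimes\mathbf{I}_\zeta\big)\begin{bmatrix}\mathbf{A}_{(\langle i,0\rangle,j)}\\ \mathbf{A}_{(\langle i,1\rangle,j)}\end{bmatrix},\quad \hat{\mathbf{B}}_k=\sum_{i=0}^{p-1}\sum_{j=0}^{k_B-1}\big(\mathbf{R}_{\theta}^{k(p-1-i+jpk_A)}\otimes\mathbf{I}_\zeta\big)\begin{bmatrix}\mathbf{B}_{(\langle i,0\rangle,j)}\\ \mathbf{B}_{(\langle i,1\rangle,j)}\end{bmatrix}$$ and returns $\hat{\mathbf{A}}_k^T\hat{\mathbf{B}}_k$. Then the threshold of the scheme is $2pk_Ak_B-1$, i.e. $\mathbf{A}^T\mathbf{B}$ can be recovered from the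 results of any $2pk_Ak_B-1$ workers, and the worst-case condition number of the recovery matrices is upper bounded by $O(q^{\,q-2pk_Ak_B+1+c_1})$, $c_1=5.5$.
   Context: $\mathbf{R}_\phi=\begin{bmatrix}\cos\phi&-\sin\phi\\ \sin\phi&\cos\phi\end{bmatrix}$, $\otimes$ is the Kronecker product, $\omega_q=e^{\mathrm{i}2\pi/q}$. For responding workers $i_0,\dots,i_{\tau-1}$ ($\tau=2pk_Ak_B-1$), the recovery matrix is the $\tau\times\tau$ complex matrix $\mathbf{G}^{vand}_{\mathcal I}$ whose rows are indexed by $e=-(pk_Ak_B-1),\dots,pk_Ak_B-1$ and whose $(e,b)$ entry is $\omega_q^{e\,i_b}$; the decoder solves systems $\hat{\mathbf{m}}\,\mathbf{G}^{vand}_{\mathcal I}=\mathbf{c}$ for each entry position of the outputs. $\kappa(\mathbf{M})=\|\mathbf{M}\|\|\mathbf{M}^{-1}\|$ with $\|\cdot\|$ the largest singular value. *)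

theory Defs
  imports Complex_Main
begin

text \<open>Matrices are functions nat => nat => 'a; dimensions are carried explicitly.\<close>

definition mmul :: "nat \<Rightarrow> (nat \<Rightarrow> nat \<Rightarrow> 'a::comm_semiring_1) \<Rightarrow> (nat \<Rightarrow> nat \<Rightarrow> 'a) \<Rightarrow> nat \<Rightarrow> nat \<Rightarrow> 'a"
  where "mmul k M N a b = (\<Sum>c<k. M a c * N c b)"

definition mtrans :: "(nat \<Rightarrow> nat \<Rightarrow> 'a) \<Rightarrow> nat \<Rightarrow> nat \<Rightarrow> 'a"
  where "mtrans M a b = M b a"

definition mid :: "nat \<Rightarrow> nat \<Rightarrow> nat \<Rightarrow> 'a::zero_neq_one"
  where "mid n a b = (if a = b \<and> a < n then 1 else 0)"

definition minv :: "nat \<Rightarrow> (nat \<Rightarrow> nat \<Rightarrow> 'a::comm_semiring_1) \<Rightarrow> nat \<Rightarrow> nat \<Rightarrow> 'a"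
  where "minv n M = (THE N. (\<forall>a b. (n \<le> a \<or> n \<le> b) \<longrightarrow> N a b = 0) \<and>
     (\<forall>a<n. \<forall>b<n. mmul n N M a b = mid n a b \<and> mmul n M N a b = mid n a b))"

fun mpow :: "nat \<Rightarrow> (nat \<Rightarrow> nat \<Rightarrow> 'a::comm_semiring_1) \<Rightarrow> nat \<Rightarrow> nat \<Rightarrow> nat \<Rightarrow> 'a" where
  "mpow n M 0 = mid n"
| "mpow n M (Suc m) = mmul n M (mpow n M m)"

definition mipow :: "nat \<Rightarrow> (nat \<Rightarrow> nat \<Rightarrow> 'a::comm_semiring_1) \<Rightarrow> int \<Rightarrow> nat \<Rightarrow> nat \<Rightarrow> 'a" where
  "mipow n M m = (if 0 \<le> m then mpow n M (nat m) else mpow n (minv n M) (nat (- m)))"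

definition rot :: "real \<Rightarrow> nat \<Rightarrow> nat \<Rightarrow> real" where
  "rot \<phi> a b = (if a = 0 \<and> b = 0 then cos \<phi> else if a = 0 \<and> b = 1 then - sin \<phi>
      else if a = 1 \<and> b = 0 then sin \<phi> else if a = 1 \<and> b = 1 then cos \<phi> else 0)"

definition kron :: "nat \<Rightarrow> nat \<Rightarrow> (nat \<Rightarrow> nat \<Rightarrow> 'a::times) \<Rightarrow> (nat \<Rightarrow> nat \<Rightarrow> 'a) \<Rightarrow> nat \<Rightarrow> nat \<Rightarrow> 'a" where
  "kron mS nS R S a b = R (a div mS) (b div nS) * S (a mod mS) (b mod nS)"

text \<open>Block-row index of \<langle>i,l\<rangle> (block rows ordered 2i+l).\<close>
definition bidx :: "nat \<Rightarrow> nat \<Rightarrow> nat" where "bidx i l = 2 * i + l"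

definition blk :: "nat \<Rightarrow> nat \<Rightarrow> (nat \<Rightarrow> nat \<Rightarrow> 'a) \<Rightarrow> nat \<Rightarrow> nat \<Rightarrow> nat \<Rightarrow> nat \<Rightarrow> 'a" where
  "blk \<zeta> c M u j s x = M (u * \<zeta> + s) (j * c + x)"

definition vstack :: "nat \<Rightarrow> (nat \<Rightarrow> nat \<Rightarrow> 'a) \<Rightarrow> (nat \<Rightarrow> nat \<Rightarrow> 'a) \<Rightarrow> nat \<Rightarrow> nat \<Rightarrow> 'a" where
  "vstack \<zeta> X Y s x = (if s < \<zeta> then X s x else Y (s - \<zeta>) x)"

definition encA :: "nat \<Rightarrow> nat \<Rightarrow> nat \<Rightarrow> nat \<Rightarrow> nat \<Rightarrow> nat \<Rightarrow> (nat \<Rightarrow> nat \<Rightarrow> real) \<Rightarrow> nat \<Rightarrow> nat \<Rightarrow> real" where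
  "encA q p kA t r k A =
    (let \<zeta> = t div (2 * p); c = r div kA; \<theta> = 2 * pi / real q in
     (\<lambda>s x. \<Sum>i<p. \<Sum>j<kA.
        mmul (2 * \<zeta>)
          (kron \<zeta> \<zeta> (mipow 2 (rot (- \<theta>)) (int k * ((int j - 1) * int p + int i + 1))) (mid \<zeta>))
          (vstack \<zeta> (blk \<zeta> c A (bidx i 0) j) (blk \<zeta> c A (bidx i 1) j)) s x))"

definition encB :: "nat \<Rightarrow> nat \<Rightarrow> nat \<Rightarrow> nat \<Rightarrow> nat \<Rightarrow> nat \<Rightarrow> nat \<Rightarrow> (nat \<Rightarrow> nat \<Rightarrow> real) \<Rightarrow> nat \<Rightarrow> nat \<Rightarrow> real" where
  "encB q p kA kB t w k B =
    (let \<zeta> = t div (2 * p); c = w div kB; \<theta> = 2 * pi / real q in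
     (\<lambda>s x. \<Sum>i<p. \<Sum>j<kB.
        mmul (2 * \<zeta>)
          (kron \<zeta> \<zeta> (mipow 2 (rot \<theta>) (int k * (int p - 1 - int i + int j * int p * int kA))) (mid \<zeta>))
          (vstack \<zeta> (blk \<zeta> c B (bidx i 0) j) (blk \<zeta> c B (bidx i 1) j)) s x))"

definition worker_out :: "nat \<Rightarrow> nat \<Rightarrow> nat \<Rightarrow> nat \<Rightarrow> nat \<Rightarrow> nat \<Rightarrow> nat \<Rightarrow> (nat \<Rightarrow> nat \<Rightarrow> real) \<Rightarrow> (nat \<Rightarrow> nat \<Rightarrow> real) \<Rightarrow> nat \<Rightarrow> nat \<Rightarrow> nat \<Rightarrow> real" where
  "worker_out q p kA kB t r w A B k =
     mmul (2 * (t div (2 * p))) (mtrans (encA q p kA t r k A)) (encB q p kA kB t w k B)"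

text \<open>Recovery matrix G^vand_I (tau x tau, tau = 2 p kA kB - 1); row a corresponds to
  e = a - (p kA kB - 1), column b to worker i b; entry omega_q^(e * i_b).\<close>
definition Gvand :: "nat \<Rightarrow> nat \<Rightarrow> nat \<Rightarrow> nat \<Rightarrow> (nat \<Rightarrow> nat) \<Rightarrow> nat \<Rightarrow> nat \<Rightarrow> complex" where
  "Gvand q p kA kB i a b =
     (if a < 2 * p * kA * kB - 1 \<and> b < 2 * p * kA * kB - 1 then
        cis (2 * pi / real q) powi ((int a - (int (p * kA * kB) - 1)) * int (i b)) else 0)"

definition sigma_max :: "nat \<Rightarrow> (nat \<Rightarrow> nat \<Rightarrow> complex) \<Rightarrow> real" where
  "sigma_max n M =
     (let H = mmul n (\<lambda>a b. cnj (M b a)) M in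
      sqrt (Max {Re ev | ev. \<exists>v. (\<exists>b<n. v b \<noteq> 0) \<and> (\<forall>a<n. (\<Sum>b<n. H a b * v b) = ev * v a)}))"

definition cond_num :: "nat \<Rightarrow> (nat \<Rightarrow> nat \<Rightarrow> complex) \<Rightarrow> real" where
  "cond_num n M = sigma_max n M * sigma_max n (minv n M)"

end

(* Worker k returns, entrywise, a real trigonometric polynomial in \<theta> k: the block products pair
   the rotations applied to A and to B into R_\<theta>^(k m) with m = j p + i - i' + j' p kA, and
   R_\<phi> = \<rho> e^(i \<phi>) + cnj \<rho> e^(-i \<phi>). Multiplied by \<omega>^(k K), K = p kA kB - 1, the output becomes a
   polynomial of degree < 2 p kA kB - 1 in \<omega>^k whose coefficients contain the blocks of A^T B;
   distinct workers give distinct nodes \<omega>^k, so any 2 p kA kB - 1 outputs determine them.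

   The recovery matrix is a \<tau> \<times> \<tau> submatrix G of the q \<times> q matrix F = (\<omega>^((e - K) k)), and
   F F^H = F^H F = q I. This expresses G^-1 through the complementary block T of F, a scaled
   Vandermonde matrix in d = q - \<tau> nodes on the unit circle at mutual distance at least 2 / q,
   whose inverse has entries at most q^(d-1) by Lagrange interpolation. As the largest singular
   value of an n \<times> n matrix is at most n times its largest entry,
   \<kappa>(G) \<le> \<tau>^2 (1 + d^2 q^(d-1)) / q \<le> 2 q^(d+2). *)

theory Submission
  imports Defs "Jordan_Normal_Form.Char_Poly"
begin

lemma sin_ge_third:
  fixes x :: real
  assumes "0 \<le> x" "x \<le> 2"
  shows "x / 3 \<le> sin x"
proof -
  have "\<bar>sin x - (\<Sum>m<3. sin_coeff m * x ^ m)\<bar> \<le> inverse (fact 3) * \<bar>x\<bar> ^ 3"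
    by (rule Maclaurin_sin_bound)
  moreover have "(\<Sum>m<3. sin_coeff m * x ^ m) = x"
    by (simp add: numeral_3_eq_3 sin_coeff_def)
  moreover have "fact 3 = (6::real)"
    by (simp add: numeral_3_eq_3)
  ultimately have "x - x ^ 3 / 6 \<le> sin x"
    using assms by (simp add: abs_if split: if_splits)
  moreover have "x ^ 3 \<le> x * 2 * 2"
    unfolding power3_eq_cube using assms by (intro mult_mono) auto
  ultimately show ?thesis
    by simp
qed

lemma pi_ge_3: "3 \<le> pi"
  using sin_x_le_x[of "pi / 6"] sin_30 by simp

lemma norm_cis_minus_one: "cmod (cis x - 1) = 2 * \<bar>sin (x / 2)\<bar>"
proof -
  have "(cmod (cis x - 1))\<^sup>2 = (cos x - 1)\<^sup>2 + (sin x)\<^sup>2"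
    by (simp add: cmod_power2)
  also have "\<dots> = 2 - 2 * cos x"
    by (simp add: power2_eq_square algebra_simps sin_squared_eq)
  also have "cos x = 1 - 2 * sin (x / 2) ^ 2"
    using cos_double_sin[of "x / 2"] by simp
  finally have "(cmod (cis x - 1))\<^sup>2 = (2 * \<bar>sin (x / 2)\<bar>)\<^sup>2"
    by (simp add: power2_eq_square)
  then show ?thesis
    by (rule power2_eq_imp_eq) simp_all
qed

lemma int_dvd_diff_iff_eq:
  fixes x y q :: nat
  assumes "x < q" "y < q"
  shows "int q dvd (int x - int y) \<longleftrightarrow> x = y"
proof
  assume dvd: "int q dvd (int x - int y)"
  show "x = y"
  proof (rule ccontr)
    assume "x \<noteq> y"
    then have "\<bar>int q\<bar> \<le> \<bar>int x - int y\<bar>"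
      using dvd by (intro dvd_imp_le_int) auto
    with assms show False
      by linarith
  qed
qed simp

lemma sum_lessThan_add_split: "(\<Sum>e<m + (n::nat). h e) = (\<Sum>a<m. h a) + (\<Sum>j<n. h (m + j))"
  by (induction n) (simp_all add: add.assoc)

subsection \<open>Matrices\<close>

lemma mmul_assoc: "mmul n (mmul n M N) K a b = mmul n M (mmul n N K) a b"
proof -
  have "mmul n (mmul n M N) K a b = (\<Sum>c<n. \<Sum>d<n. M a d * N d c * K c b)"
    unfolding mmul_def by (simp add: sum_distrib_right)
  also have "\<dots> = (\<Sum>d<n. \<Sum>c<n. M a d * N d c * K c b)"
    by (rule sum.swap)
  also have "\<dots> = mmul n M (mmul n N K) a b"
    unfolding mmul_def by (simp add: sum_distrib_left mult.assoc)
  finally show ?thesis .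
qed

lemma mmul_mid_left: "a < n \<Longrightarrow> mmul n (mid n) M a b = M a b"
  unfolding mmul_def mid_def of_bool_def[symmetric] by simp

lemma mmul_mid_right: "b < n \<Longrightarrow> mmul n M (mid n) a b = M a b"
  unfolding mmul_def mid_def of_bool_def[symmetric] by (simp add: eq_commute)

lemma minv_eqI:
  fixes M N :: "nat \<Rightarrow> nat \<Rightarrow> 'a::comm_semiring_1"
  assumes outside: "\<And>a b. n \<le> a \<or> n \<le> b \<Longrightarrow> N a b = 0"
    and left: "\<And>a b. a < n \<Longrightarrow> b < n \<Longrightarrow> mmul n N M a b = mid n a b"
    and right: "\<And>a b. a < n \<Longrightarrow> b < n \<Longrightarrow> mmul n M N a b = mid n a b"
  shows "minv n M = N"
  unfolding minv_def
proof (rule the_equality)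
  fix N'
  assume N': "(\<forall>a b. (n \<le> a \<or> n \<le> b) \<longrightarrow> N' a b = 0) \<and>
    (\<forall>a<n. \<forall>b<n. mmul n N' M a b = mid n a b \<and> mmul n M N' a b = mid n a b)"
  show "N' = N"
  proof (intro ext)
    fix a b
    show "N' a b = N a b"
    proof (cases "a < n \<and> b < n")
      case True
      have "N' a b = mmul n N' (mid n) a b"
        using True by (simp add: mmul_mid_right)
      also have "\<dots> = mmul n N' (mmul n M N) a b"
        unfolding mmul_def[of n N'] using True right by (intro sum.cong) auto
      also have "\<dots> = mmul n (mmul n N' M) N a b"
        by (simp add: mmul_assoc)
      also have "\<dots> = mmul n (mid n) N a b"
        unfolding mmul_def[of n _ N] using True N' by (intro sum.cong) auto
      also have "\<dots> = N a b"
        using True by (simp add: mmul_mid_left)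
      finally show ?thesis .
    next
      case False
      then show ?thesis
        using N' outside by auto
    qed
  qed
qed (use outside left right in blast)

lemma mmul_two: "mmul 2 M N a b = M a 0 * N 0 b + M a 1 * N 1 b"
  by (simp add: mmul_def numeral_2_eq_2)

lemma mmul_rot: "mmul 2 (rot x) (rot y) = rot (x + y)"
proof (intro ext)
  fix a b
  show "mmul 2 (rot x) (rot y) a b = rot (x + y) a b"
    unfolding mmul_two
    by (cases "a = 0"; cases "a = 1"; cases "b = 0"; cases "b = 1")
      (simp_all add: rot_def cos_add sin_add)
qed

lemma rot_0: "rot 0 = mid 2"
  by (intro ext) (auto simp: rot_def mid_def)

lemma mpow_rot: "mpow 2 (rot x) m = rot (real m * x)"
  by (induction m) (simp_all add: rot_0 mmul_rot distrib_right)

lemma minv_rot: "minv 2 (rot x) = rot (- x)"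
proof (rule minv_eqI)
  show "rot (- x) a b = 0" if "2 \<le> a \<or> 2 \<le> b" for a b
    using that by (auto simp: rot_def)
qed (simp_all add: mmul_rot rot_0)

lemma mipow_rot: "mipow 2 (rot x) m = rot (of_int m * x)"
  unfolding mipow_def by (auto simp: mpow_rot minv_rot)

lemma rot_transpose_mmul:
  assumes "l < 2" "l' < 2"
  shows "rot x 0 l * rot y 0 l' + rot x 1 l * rot y 1 l' = rot (y - x) l l'"
  using assms by (cases "l = 0"; cases "l' = 0") (auto simp: rot_def cos_diff sin_diff algebra_simps)

subsection \<open>Roots of unity\<close>

definition uroot :: "nat \<Rightarrow> int \<Rightarrow> complex" where
  "uroot q m = cis (2 * pi * of_int m / real q)"

lemma uroot_add: "uroot q (a + b) = uroot q a * uroot q b"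
  unfolding uroot_def by (simp add: cis_mult add_divide_distrib distrib_left)

lemma uroot_0 [simp]: "uroot q 0 = 1"
  by (simp add: uroot_def)

lemma cnj_uroot: "cnj (uroot q a) = uroot q (- a)"
  unfolding uroot_def by (simp add: cis_cnj)

lemma norm_uroot [simp]: "cmod (uroot q a) = 1"
  unfolding uroot_def by simp

lemma uroot_cancel: "uroot q (- c) * uroot q c = 1"
  by (simp flip: uroot_add)

lemma uroot_diff: "uroot q (a - b) = uroot q a * cnj (uroot q b)"
  using uroot_add[of q a "- b"] by (simp add: cnj_uroot)

lemma uroot_power: "uroot q a ^ n = uroot q (a * int n)"
  unfolding uroot_def by (simp add: DeMoivre mult_ac)

lemma uroot_multiple: "0 < q \<Longrightarrow> int q dvd a \<Longrightarrow> uroot q a = 1"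
  by (auto simp: uroot_def elim!: dvdE)
     (metis Ints_of_int cis_multiple_2pi mult.assoc)

lemma sin_pi_frac_ge:
  fixes r :: int
  assumes r: "0 < r" "r < int q"
  shows "1 / real q \<le> sin (pi * of_int r / real q)"
proof -
  have q: "2 \<le> real q"
    using r by linarith
  \<comment> \<open>the closest the angle \<open>\<pi> r / q\<close> can come to \<open>0\<close> or \<open>\<pi>\<close> is \<open>\<pi> / q\<close>\<close>
  have "sin (pi / real q) \<le> sin (pi * of_int r / real q)"
  proof (cases "of_int r / real q \<le> 1 / 2")
    case True
    then show ?thesis
      using r q by (intro sin_monotone_2pi_le) (auto simp: field_simps intro: order_trans[of _ 0])
  next
    case False
    have mirror: "sin (pi * of_int r / real q) = sin (pi * (real q - of_int r) / real q)"
      using q by (simp add: algebra_simps diff_divide_distrib)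
    have "pi * (1 + of_int r) \<le> pi * real q"
      using r by (intro mult_left_mono) auto
    moreover have "- (pi * real q) \<le> pi * 2"
      using pi_gt_zero q by (smt (verit) mult_nonneg_nonneg)
    ultimately show ?thesis
      unfolding mirror using False q by (intro sin_monotone_2pi_le) (auto simp: field_simps)
  qed
  moreover have "(pi / real q) / 3 \<le> sin (pi / real q)"
    using q pi_less_4 by (intro sin_ge_third) (auto simp: field_simps)
  moreover have "1 / real q \<le> (pi / real q) / 3"
    using q pi_ge_3 by (simp add: field_simps)
  ultimately show ?thesis
    by linarith
qed

lemma norm_uroot_minus_one_ge:
  assumes q: "0 < q" and nd: "\<not> int q dvd m"
  shows "2 / real q \<le> cmod (uroot q m - 1)"
proof -
  define r where "r = m mod int q"
  have "0 \<le> r" "r \<noteq> 0" and rq: "r < int q"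
    using nd q unfolding r_def by (auto simp: dvd_eq_mod_eq_0)
  have "of_int m = real q * of_int (m div int q) + of_int r"
    unfolding r_def by (metis div_mult_mod_eq of_int_add of_int_mult of_int_of_nat_eq mult.commute)
  then have "2 * pi * of_int m / real q / 2 = pi * of_int r / real q + pi * of_int (m div int q)"
    using q by (simp add: field_simps)
  then have "\<bar>sin (2 * pi * of_int m / real q / 2)\<bar> = \<bar>sin (pi * of_int r / real q)\<bar>"
    by (simp add: sin_add abs_mult)
  moreover have "1 / real q \<le> sin (pi * of_int r / real q)"
    using \<open>0 \<le> r\<close> \<open>r \<noteq> 0\<close> rq by (intro sin_pi_frac_ge) auto
  ultimately show ?thesis
    unfolding uroot_def norm_cis_minus_one by simp
qed

lemma uroot_eq_1_iff: "0 < q \<Longrightarrow> uroot q m = 1 \<longleftrightarrow> int q dvd m"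
  using norm_uroot_minus_one_ge[of q m] uroot_multiple[of q m] by force

lemma sum_uroot:
  assumes q: "0 < q"
  shows "(\<Sum>e<q. uroot q (m * int e)) = (if int q dvd m then of_nat q else 0)"
proof (cases "int q dvd m")
  case True
  then show ?thesis
    using q by (simp add: uroot_multiple)
next
  case False
  have "(\<Sum>e<q. uroot q (m * int e)) = (\<Sum>e<q. uroot q m ^ e)"
    by (simp add: uroot_power)
  also have "\<dots> = (1 - uroot q m ^ q) / (1 - uroot q m)"
    using False q by (simp add: sum_gp_strict uroot_eq_1_iff)
  also have "uroot q m ^ q = 1"
    using q by (simp add: uroot_power uroot_multiple)
  finally show ?thesis
    using False by simp
qed

lemma norm_uroot_diff_ge:
  assumes "x < q" "y < q" "x \<noteq> y"
  shows "2 / real q \<le> cmod (uroot q (int x) - uroot q (int y))"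
proof -
  have "uroot q (int x) - uroot q (int y) = (uroot q (int x - int y) - 1) * uroot q (int y)"
    using uroot_add[of q "int x - int y" "int y"] by (simp add: algebra_simps)
  then show ?thesis
    using assms norm_uroot_minus_one_ge[of q "int x - int y"]
    by (simp add: norm_mult int_dvd_diff_iff_eq)
qed

lemma inj_on_uroot: "inj_on (\<lambda>k. uroot q (int k)) {..<q}"
proof (rule inj_onI, rule ccontr)
  fix x y
  assume "x \<in> {..<q}" "y \<in> {..<q}" "uroot q (int x) = uroot q (int y)" "x \<noteq> y"
  then show False
    using norm_uroot_diff_ge[of x q y] by simp
qed

subsection \<open>Vandermonde systems\<close>

lemma poly_eq_sum_lessThan:
  fixes p :: "'a::{comm_semiring_0,semiring_1} poly"
  assumes "degree p < d"
  shows "poly p x = (\<Sum>j<d. coeff p j * x ^ j)"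
proof -
  have "poly p x = (\<Sum>j\<le>degree p. coeff p j * x ^ j)"
    by (rule poly_altdef)
  also have "\<dots> = (\<Sum>j<d. coeff p j * x ^ j)"
    using assms by (intro sum.mono_neutral_left) (auto simp: coeff_eq_0)
  finally show ?thesis .
qed

lemma vandermonde_coeffs_eq_0:
  fixes z c :: "nat \<Rightarrow> 'a::idom"
  assumes inj: "inj_on z {..<N}"
    and zero: "\<And>b. b < N \<Longrightarrow> (\<Sum>n<N. c n * z b ^ n) = 0"
    and n: "n < N"
  shows "c n = 0"
proof -
  define P where "P = (\<Sum>n<N. monom (c n) n)"
  have coeff_P: "coeff P k = (if k < N then c k else 0)" for k
    unfolding P_def by (simp add: coeff_sum coeff_monom)
  have "degree P \<le> N - 1"
    by (rule degree_le) (use coeff_P in auto)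
  then have "degree P < card (z ` {..<N})"
    using n card_image[OF inj] by simp
  moreover have "poly P x = (\<Sum>n<N. c n * x ^ n)" for x
    unfolding P_def by (simp add: poly_sum poly_monom)
  ultimately have "P = 0"
    using zero n card_image[OF inj] by (intro poly_eqI_degree[of "z ` {..<N}"]) auto
  then show ?thesis
    using coeff_P n by (metis coeff_0)
qed

definition lagrange_basis :: "(nat \<Rightarrow> 'a::field) \<Rightarrow> nat \<Rightarrow> nat \<Rightarrow> 'a poly" where
  "lagrange_basis z d b =
     Polynomial.smult (inverse (\<Prod>c\<in>{..<d} - {b}. z b - z c)) (\<Prod>c\<in>{..<d} - {b}. [:- z c, 1:])"

lemma degree_lagrange_basis:
  assumes "b < d"
  shows "degree (lagrange_basis z d b) < d"
proof -
  have "degree (lagrange_basis z d b) \<le> degree (\<Prod>c\<in>{..<d} - {b}. [:- z c, 1:])"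
    unfolding lagrange_basis_def by simp
  also have "\<dots> \<le> (\<Sum>c\<in>{..<d} - {b}. degree [:- z c, 1:])"
    using degree_prod_sum_le[of "{..<d} - {b}" "\<lambda>c. [:- z c, 1:]"] by (simp add: o_def)
  also have "\<dots> = d - 1"
    using assms by simp
  finally show ?thesis
    using assms by linarith
qed

lemma poly_lagrange_basis:
  assumes inj: "inj_on z {..<d}" and "b < d" "c < d"
  shows "poly (lagrange_basis z d b) (z c) = (if b = c then 1 else 0)"
proof (cases "b = c")
  case True
  have "(\<Prod>c\<in>{..<d} - {b}. z b - z c) \<noteq> 0"
    using assms by (auto simp: inj_on_def)
  then show ?thesis
    unfolding lagrange_basis_def poly_smult poly_prod True by simp
next
  case False
  then show ?thesis
    unfolding lagrange_basis_def poly_smult poly_prod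
    using assms by (subst prod_zero) auto
qed

lemma lagrange_interpolation:
  assumes inj: "inj_on z {..<d}" and deg: "degree P < d"
  shows "P = (\<Sum>b<d. Polynomial.smult (poly P (z b)) (lagrange_basis z d b))"
proof -
  define Q where "Q = P - (\<Sum>b<d. Polynomial.smult (poly P (z b)) (lagrange_basis z d b))"
  have "degree Q \<le> d - 1"
  proof (rule degree_le, intro allI impI)
    fix k
    assume "d - 1 < k"
    then have "degree P < k" "\<And>b. b < d \<Longrightarrow> degree (lagrange_basis z d b) < k"
      using deg degree_lagrange_basis[of _ d z] by (simp, fastforce)
    then show "coeff Q k = 0"
      unfolding Q_def by (simp add: coeff_sum coeff_eq_0)
  qed
  then have "degree Q < card (z ` {..<d})"
    using deg card_image[OF inj] by simp
  moreover have "poly Q (z c) = 0" if "c < d" for c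
    using that unfolding Q_def
    by (simp add: poly_sum poly_lagrange_basis[OF inj] if_distrib sum.delta' cong: if_cong)
  ultimately have "Q = 0"
    using card_image[OF inj] by (intro poly_eqI_degree[of "z ` {..<d}"]) auto
  then show ?thesis
    unfolding Q_def by simp
qed

lemma sum_coeff_lagrange_basis_power:
  assumes "inj_on z {..<d}" "b < d" "c < d"
  shows "(\<Sum>j<d. coeff (lagrange_basis z d b) j * z c ^ j) = (if b = c then 1 else 0)"
  using assms poly_lagrange_basis poly_eq_sum_lessThan[OF degree_lagrange_basis] by metis

lemma sum_power_coeff_lagrange_basis:
  assumes inj: "inj_on z {..<d}" and "j < d" "j' < d"
  shows "(\<Sum>b<d. z b ^ j * coeff (lagrange_basis z d b) j') = (if j = j' then 1 else 0)"
proof -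
  have "monom 1 j = (\<Sum>b<d. Polynomial.smult (z b ^ j) (lagrange_basis z d b))"
    using lagrange_interpolation[OF inj, of "monom 1 j"] assms by (simp add: poly_monom degree_monom_eq)
  then have "coeff (monom 1 j) j' = coeff (\<Sum>b<d. Polynomial.smult (z b ^ j) (lagrange_basis z d b)) j'"
    by simp
  then show ?thesis
    by (simp add: coeff_sum coeff_monom)
qed

lemma norm_coeff_prod_linear_le:
  fixes a :: "nat \<Rightarrow> 'a::real_normed_field"
  assumes "finite C" "\<And>c. c \<in> C \<Longrightarrow> norm (a c) \<le> 1"
  shows "norm (coeff (\<Prod>c\<in>C. [:- a c, 1:]) k) \<le> 2 ^ card C"
  using assms
proof (induction C arbitrary: k rule: finite_induct)
  case empty
  then show ?case
    by (cases k) auto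
next
  case (insert x C)
  define P where "P = (\<Prod>c\<in>C. [:- a c, 1:])"
  have IH: "norm (coeff P k) \<le> 2 ^ card C" for k
    unfolding P_def using insert by auto
  have "coeff (\<Prod>c\<in>insert x C. [:- a c, 1:]) k
      = - a x * coeff P k + (if k = 0 then 0 else coeff P (k - 1))"
    using insert unfolding P_def by (simp add: coeff_pCons')
  then have "norm (coeff (\<Prod>c\<in>insert x C. [:- a c, 1:]) k)
      \<le> norm (a x) * norm (coeff P k) + norm (if k = 0 then 0 else coeff P (k - 1))"
    by (metis norm_triangle_ineq norm_mult norm_minus_cancel)
  also have "\<dots> \<le> 1 * 2 ^ card C + 2 ^ card C"
    using IH insert.prems by (intro add_mono mult_mono) auto
  finally show ?case
    using insert by simp
qed

lemma norm_coeff_lagrange_basis_le: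
  fixes z :: "nat \<Rightarrow> 'a::real_normed_field"
  assumes unit: "\<And>c. c < d \<Longrightarrow> norm (z c) \<le> 1" and "0 < \<delta>"
    and sep: "\<And>c c'. c < d \<Longrightarrow> c' < d \<Longrightarrow> c \<noteq> c' \<Longrightarrow> \<delta> \<le> norm (z c - z c')"
    and b: "b < d"
  shows "norm (coeff (lagrange_basis z d b) j) \<le> 2 ^ (d - 1) / \<delta> ^ (d - 1)"
proof -
  have "norm (coeff (\<Prod>c\<in>{..<d} - {b}. [:- z c, 1:]) j) \<le> 2 ^ (d - 1)"
    using norm_coeff_prod_linear_le[of "{..<d} - {b}" z j] unit b by auto
  moreover have "\<delta> ^ (d - 1) \<le> norm (\<Prod>c\<in>{..<d} - {b}. z b - z c)"
  proof -
    have "\<delta> ^ (d - 1) = (\<Prod>c\<in>{..<d} - {b}. \<delta>)"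
      using b by simp
    also have "\<dots> \<le> (\<Prod>c\<in>{..<d} - {b}. norm (z b - z c))"
      using sep b \<open>0 < \<delta>\<close> by (intro prod_mono) auto
    finally show ?thesis
      by (simp add: prod_norm)
  qed
  then have "norm (coeff (\<Prod>c\<in>{..<d} - {b}. [:- z c, 1:]) j) / norm (\<Prod>c\<in>{..<d} - {b}. z b - z c)
      \<le> 2 ^ (d - 1) / \<delta> ^ (d - 1)"
    using calculation \<open>0 < \<delta>\<close> by (intro frac_le) auto
  then show ?thesis
    unfolding lagrange_basis_def by (simp add: norm_divide field_simps)
qed

subsection \<open>Largest singular value\<close>

definition eigvals :: "nat \<Rightarrow> (nat \<Rightarrow> nat \<Rightarrow> complex) \<Rightarrow> complex set" where
  "eigvals n H = {ev. \<exists>v. (\<exists>b<n. v b \<noteq> 0) \<and> (\<forall>a<n. (\<Sum>b<n. H a b * v b) = ev * v a)}"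

definition gram :: "nat \<Rightarrow> (nat \<Rightarrow> nat \<Rightarrow> complex) \<Rightarrow> nat \<Rightarrow> nat \<Rightarrow> complex" where
  "gram n M = mmul n (\<lambda>a b. cnj (M b a)) M"

lemma sigma_max_eq: "sigma_max n M = sqrt (Max (Re ` eigvals n (gram n M)))"
  unfolding sigma_max_def eigvals_def gram_def Let_def by (simp add: setcompr_eq_image)

lemma eigvals_eq_eigenvalue: "eigvals n H = {ev. eigenvalue (mat n n (\<lambda>(a, b). H a b)) ev}"
proof -
  define Hm where "Hm = mat n n (\<lambda>(a, b). H a b)"
  have mult_vec: "(Hm *\<^sub>v w) $ a = (\<Sum>b<n. H a b * w $ b)" if "a < n" "w \<in> carrier_vec n" for w a
    using that unfolding Hm_def by (simp add: scalar_prod_def lessThan_atLeast0)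
  have "(\<exists>v. (\<exists>b<n. v b \<noteq> 0) \<and> (\<forall>a<n. (\<Sum>b<n. H a b * v b) = ev * v a)) \<longleftrightarrow>
      (\<exists>w. eigenvector Hm w ev)" for ev
  proof
    assume "\<exists>v. (\<exists>b<n. v b \<noteq> 0) \<and> (\<forall>a<n. (\<Sum>b<n. H a b * v b) = ev * v a)"
    then obtain v where "\<exists>b<n. v b \<noteq> 0" "\<forall>a<n. (\<Sum>b<n. H a b * v b) = ev * v a"
      by blast
    then have "eigenvector Hm (vec n v) ev"
      unfolding eigenvector_def Hm_def using mult_vec
      by (auto simp: Hm_def vec_eq_iff intro!: eq_vecI)
    then show "\<exists>w. eigenvector Hm w ev" ..
  next
    assume "\<exists>w. eigenvector Hm w ev"
    then obtain w where "w \<in> carrier_vec n" "w \<noteq> 0\<^sub>v n" "Hm *\<^sub>v w = ev \<cdot>\<^sub>v w"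
      unfolding eigenvector_def Hm_def by auto
    then have "(\<exists>b<n. w $ b \<noteq> 0) \<and> (\<forall>a<n. (\<Sum>b<n. H a b * w $ b) = ev * w $ a)"
      using mult_vec by (auto simp: vec_eq_iff)
    then show "\<exists>v. (\<exists>b<n. v b \<noteq> 0) \<and> (\<forall>a<n. (\<Sum>b<n. H a b * v b) = ev * v a)"
      by blast
  qed
  then show ?thesis
    unfolding eigvals_def eigenvalue_def Hm_def by blast
qed

lemma finite_eigvals: "finite (eigvals n H)"
proof -
  define Hm where "Hm = mat n n (\<lambda>(a, b). H a b)"
  have "char_poly Hm \<noteq> 0"
    using degree_monic_char_poly[of Hm n] unfolding Hm_def by auto
  moreover have "{ev. eigenvalue Hm ev} = {x. poly (char_poly Hm) x = 0}"
    using eigenvalue_root_char_poly[of Hm n] unfolding Hm_def by auto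
  ultimately show ?thesis
    unfolding eigvals_eq_eigenvalue Hm_def[symmetric] by (simp add: poly_roots_finite)
qed

lemma eigvals_nonempty:
  assumes "0 < n"
  shows "eigvals n H \<noteq> {}"
proof -
  define Hm where "Hm = mat n n (\<lambda>(a, b). H a b)"
  have "degree (char_poly Hm) = n"
    using degree_monic_char_poly[of Hm n] unfolding Hm_def by auto
  then have "\<not> constant (poly (char_poly Hm))"
    using assms constant_degree[of "char_poly Hm"] by simp
  then obtain z where "poly (char_poly Hm) z = 0"
    using fundamental_theorem_of_algebra by blast
  then show ?thesis
    unfolding eigvals_eq_eigenvalue Hm_def[symmetric]
    using eigenvalue_root_char_poly[of Hm n] unfolding Hm_def by auto
qed

lemma square_sum_le_card_mult_sum_squares:
  fixes x :: "nat \<Rightarrow> real"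
  shows "(\<Sum>b<n. x b)\<^sup>2 \<le> real n * (\<Sum>b<n. (x b)\<^sup>2)"
proof -
  have "(\<Sum>b<n. x b)\<^sup>2 = (\<Sum>b<n. \<Sum>c<n. x b * x c)"
    by (simp add: power2_eq_square sum_product)
  also have "\<dots> \<le> (\<Sum>b<n. \<Sum>c<n. ((x b)\<^sup>2 + (x c)\<^sup>2) / 2)"
  proof (intro sum_mono)
    fix b c
    show "x b * x c \<le> ((x b)\<^sup>2 + (x c)\<^sup>2) / 2"
      using sum_squares_bound[of "x b" "x c"] by simp
  qed
  also have "\<dots> = (\<Sum>b<n. \<Sum>c<n. (x b)\<^sup>2 / 2) + (\<Sum>b<n. \<Sum>c<n. (x c)\<^sup>2 / 2)"
    by (simp add: add_divide_distrib sum.distrib)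
  also have "\<dots> = real n * (\<Sum>b<n. (x b)\<^sup>2)"
    by (simp add: sum_divide_distrib[symmetric] sum_distrib_left[symmetric])
  finally show ?thesis .
qed

lemma quadratic_form_gram:
  "(\<Sum>a<n. cnj (v a) * (\<Sum>b<n. gram n M a b * v b)) =
   (\<Sum>c<n. of_real ((cmod (\<Sum>b<n. M c b * v b))\<^sup>2))"
proof -
  have "(\<Sum>a<n. cnj (v a) * (\<Sum>b<n. gram n M a b * v b)) =
        (\<Sum>a<n. \<Sum>b<n. \<Sum>c<n. cnj (M c a * v a) * (M c b * v b))"
    unfolding gram_def mmul_def by (simp add: sum_distrib_left sum_distrib_right mult_ac)
  also have "\<dots> = (\<Sum>a<n. \<Sum>c<n. \<Sum>b<n. cnj (M c a * v a) * (M c b * v b))"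
    by (rule sum.cong[OF refl], rule sum.swap)
  also have "\<dots> = (\<Sum>c<n. \<Sum>a<n. \<Sum>b<n. cnj (M c a * v a) * (M c b * v b))"
    by (rule sum.swap)
  also have "\<dots> = (\<Sum>c<n. cnj (\<Sum>b<n. M c b * v b) * (\<Sum>b<n. M c b * v b))"
    by (simp only: cnj_sum sum_product)
  also have "\<dots> = (\<Sum>c<n. of_real ((cmod (\<Sum>b<n. M c b * v b))\<^sup>2))"
    by (intro sum.cong refl) (metis complex_norm_square mult.commute)
  finally show ?thesis .
qed

lemma gram_eigval_eq:
  assumes "ev \<in> eigvals n (gram n M)"
  obtains v where "0 < (\<Sum>a<n. (cmod (v a))\<^sup>2)"
    "ev = of_real ((\<Sum>c<n. (cmod (\<Sum>b<n. M c b * v b))\<^sup>2) / (\<Sum>a<n. (cmod (v a))\<^sup>2))"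
proof -
  obtain v b where "b < n" "v b \<noteq> 0" and eig: "\<forall>a<n. (\<Sum>b<n. gram n M a b * v b) = ev * v a"
    using assms unfolding eigvals_def by auto
  define N where "N = (\<Sum>a<n. (cmod (v a))\<^sup>2)"
  define Q where "Q = (\<Sum>c<n. (cmod (\<Sum>b<n. M c b * v b))\<^sup>2)"
  have "0 < (cmod (v b))\<^sup>2"
    using \<open>v b \<noteq> 0\<close> by simp
  also have "\<dots> \<le> N"
    unfolding N_def using \<open>b < n\<close> by (intro member_le_sum) auto
  finally have "0 < N" .
  have "ev * of_real N = (\<Sum>a<n. cnj (v a) * (ev * v a))"
    unfolding N_def of_real_sum sum_distrib_left
    by (intro sum.cong refl) (metis complex_norm_square mult.commute mult.left_commute)
  also have "\<dots> = (\<Sum>a<n. cnj (v a) * (\<Sum>b<n. gram n M a b * v b))"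
    using eig by simp
  also have "\<dots> = of_real Q"
    unfolding quadratic_form_gram Q_def by simp
  finally have "ev = of_real (Q / N)"
    using \<open>0 < N\<close> by (simp add: eq_divide_eq)
  with \<open>0 < N\<close> show ?thesis
    unfolding Q_def N_def by (rule that)
qed

lemma norm_mult_vec_squared_le:
  assumes "\<And>b. b < n \<Longrightarrow> cmod (M c b) \<le> B"
  shows "(cmod (\<Sum>b<n. M c b * v b))\<^sup>2 \<le> B\<^sup>2 * (real n * (\<Sum>b<n. (cmod (v b))\<^sup>2))"
proof -
  have "cmod (\<Sum>b<n. M c b * v b) \<le> (\<Sum>b<n. B * cmod (v b))"
    using assms by (intro order_trans[OF norm_sum] sum_mono) (simp add: norm_mult mult_right_mono)
  then have "(cmod (\<Sum>b<n. M c b * v b))\<^sup>2 \<le> (B * (\<Sum>b<n. cmod (v b)))\<^sup>2"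
    by (simp add: sum_distrib_left power_mono)
  also have "\<dots> \<le> B\<^sup>2 * (real n * (\<Sum>b<n. (cmod (v b))\<^sup>2))"
    unfolding power_mult_distrib
    by (intro mult_left_mono square_sum_le_card_mult_sum_squares) auto
  finally show ?thesis .
qed

lemma Re_gram_eigval_bounds:
  assumes "ev \<in> eigvals n (gram n M)" "\<And>a b. a < n \<Longrightarrow> b < n \<Longrightarrow> cmod (M a b) \<le> B"
  shows "0 \<le> Re ev" "Re ev \<le> (real n * B)\<^sup>2"
proof -
  obtain v where N: "0 < (\<Sum>a<n. (cmod (v a))\<^sup>2)"
    and ev: "ev = of_real ((\<Sum>c<n. (cmod (\<Sum>b<n. M c b * v b))\<^sup>2) / (\<Sum>a<n. (cmod (v a))\<^sup>2))"
    using gram_eigval_eq[OF assms(1)] by blast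
  show "0 \<le> Re ev"
    unfolding ev using N by (simp add: sum_nonneg)
  have "(\<Sum>c<n. (cmod (\<Sum>b<n. M c b * v b))\<^sup>2)
      \<le> (\<Sum>c<n. B\<^sup>2 * (real n * (\<Sum>b<n. (cmod (v b))\<^sup>2)))"
    using assms(2) by (intro sum_mono norm_mult_vec_squared_le) auto
  also have "\<dots> = (real n * B)\<^sup>2 * (\<Sum>b<n. (cmod (v b))\<^sup>2)"
    by (simp add: power2_eq_square)
  finally show "Re ev \<le> (real n * B)\<^sup>2"
    unfolding ev using N by (simp add: divide_le_eq)
qed

lemma sigma_max_bounds:
  assumes "0 < n" "\<And>a b. a < n \<Longrightarrow> b < n \<Longrightarrow> cmod (M a b) \<le> B"
  shows "0 \<le> sigma_max n M" "sigma_max n M \<le> real n * B"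
proof -
  let ?E = "Re ` eigvals n (gram n M)"
  have E: "finite ?E" "?E \<noteq> {}"
    using finite_eigvals eigvals_nonempty[OF assms(1)] by auto
  have "0 \<le> B"
    using assms by (meson norm_ge_zero order_trans)
  moreover have "0 \<le> Max ?E"
    using E Re_gram_eigval_bounds(1)[OF _ assms(2)] by (auto simp: Max_ge_iff)
  moreover have "Max ?E \<le> (real n * B)\<^sup>2"
    using E Re_gram_eigval_bounds(2)[OF _ assms(2)] by (auto simp: Max_le_iff)
  ultimately show "0 \<le> sigma_max n M" "sigma_max n M \<le> real n * B"
    unfolding sigma_max_eq by (auto intro: real_le_lsqrt)
qed

subsection \<open>Inverting a block of a scaled unitary matrix\<close>

text \<open>If \<open>F = [S X; Y T]\<close> satisfies \<open>F F\<^sup>H = F\<^sup>H F = q I\<close> and \<open>Ti\<close> inverts \<open>T\<close>, then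
  \<open>S\<^sup>-\<^sup>1 = (S\<^sup>H - Y\<^sup>H Ti\<^sup>H X\<^sup>H) / q\<close>; the hypotheses are the block rows of \<open>F F\<^sup>H = q I\<close>
  (resp. \<open>F\<^sup>H F = q I\<close>) that are needed.\<close>

lemma scaled_unitary_block_inverse_right:
  fixes S X Y T Ti :: "nat \<Rightarrow> nat \<Rightarrow> complex" and q :: complex
  assumes q: "q \<noteq> 0"
    and R1: "(\<Sum>b<\<tau>. S a b * cnj (S a' b)) + (\<Sum>j<d. X a j * cnj (X a' j)) = (if a = a' then q else 0)"
    and R2: "\<And>j. j < d \<Longrightarrow> (\<Sum>b<\<tau>. S a b * cnj (Y j b)) = - (\<Sum>j0<d. X a j0 * cnj (T j j0))"
    and TiL: "\<And>j' j0. j' < d \<Longrightarrow> j0 < d \<Longrightarrow> (\<Sum>j<d. Ti j' j * T j j0) = (if j' = j0 then 1 else 0)"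
  shows "(\<Sum>b<\<tau>. S a b * ((1/q) * (cnj (S a' b) - (\<Sum>j<d. \<Sum>j'<d. cnj (Y j b) * cnj (Ti j' j) * cnj (X a' j'))))) = (if a = a' then 1 else 0)"
proof -
  have "(\<Sum>b<\<tau>. \<Sum>j<d. \<Sum>j'<d. S a b * (cnj (Y j b) * cnj (Ti j' j) * cnj (X a' j'))) =
        (\<Sum>j<d. \<Sum>b<\<tau>. \<Sum>j'<d. S a b * (cnj (Y j b) * cnj (Ti j' j) * cnj (X a' j')))"
    by (rule sum.swap)
  also have "\<dots> = (\<Sum>j<d. \<Sum>j'<d. \<Sum>b<\<tau>. S a b * (cnj (Y j b) * cnj (Ti j' j) * cnj (X a' j')))"
    by (rule sum.cong[OF refl], rule sum.swap)
  also have "\<dots> = (\<Sum>j<d. \<Sum>j'<d. (\<Sum>b<\<tau>. S a b * cnj (Y j b)) * (cnj (Ti j' j) * cnj (X a' j')))"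
    by (simp add: sum_distrib_left sum_distrib_right mult_ac)
  also have "\<dots> = (\<Sum>j<d. \<Sum>j'<d. (- (\<Sum>j0<d. X a j0 * cnj (T j j0))) * (cnj (Ti j' j) * cnj (X a' j')))"
    using R2 by simp
  also have "\<dots> = - (\<Sum>j<d. \<Sum>j'<d. \<Sum>j0<d. X a j0 * cnj (X a' j') * cnj (Ti j' j * T j j0))"
    by (simp add: sum_distrib_left sum_distrib_right sum_negf mult_ac)
  also have "\<dots> = - (\<Sum>j'<d. \<Sum>j<d. \<Sum>j0<d. X a j0 * cnj (X a' j') * cnj (Ti j' j * T j j0))"
    by (rule arg_cong[where f=uminus], rule sum.swap)
  also have "\<dots> = - (\<Sum>j'<d. \<Sum>j0<d. \<Sum>j<d. X a j0 * cnj (X a' j') * cnj (Ti j' j * T j j0))"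
    by (rule arg_cong[where f=uminus], rule sum.cong[OF refl], rule sum.swap)
  also have "\<dots> = - (\<Sum>j'<d. \<Sum>j0<d. X a j0 * cnj (X a' j') * cnj (\<Sum>j<d. Ti j' j * T j j0))"
    by (simp add: sum_distrib_left cnj_sum)
  also have "\<dots> = - (\<Sum>j'<d. \<Sum>j0<d. X a j0 * cnj (X a' j') * (if j' = j0 then 1 else 0))"
    using TiL by (intro arg_cong[where f=uminus] sum.cong refl) auto
  also have "\<dots> = - (\<Sum>j'<d. X a j' * cnj (X a' j'))"
    by (simp add: if_distrib sum.delta' cong: if_cong)
  finally have e: "(\<Sum>b<\<tau>. \<Sum>j<d. \<Sum>j'<d. S a b * (cnj (Y j b) * cnj (Ti j' j) * cnj (X a' j'))) = - (\<Sum>j'<d. X a j' * cnj (X a' j'))" .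
  have "(\<Sum>b<\<tau>. S a b * ((1/q) * (cnj (S a' b) - (\<Sum>j<d. \<Sum>j'<d. cnj (Y j b) * cnj (Ti j' j) * cnj (X a' j'))))) =
     (1/q) * ((\<Sum>b<\<tau>. S a b * cnj (S a' b)) - (\<Sum>b<\<tau>. \<Sum>j<d. \<Sum>j'<d. S a b * (cnj (Y j b) * cnj (Ti j' j) * cnj (X a' j'))))"
    by (simp add: sum_distrib_left right_diff_distrib sum_subtractf mult_ac)
  also have "\<dots> = (1/q) * (if a = a' then q else 0)" unfolding e using R1 by simp
  also have "\<dots> = (if a = a' then 1 else 0)" using q by simp
  finally show ?thesis .
qed

lemma scaled_unitary_block_inverse_left:
  fixes S X Y T Ti :: "nat \<Rightarrow> nat \<Rightarrow> complex" and q :: complex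
  assumes q: "q \<noteq> 0"
    and C1: "(\<Sum>a<\<tau>. cnj (S a b) * S a b') + (\<Sum>j<d. cnj (Y j b) * Y j b') = (if b = b' then q else 0)"
    and C2: "\<And>j'. j' < d \<Longrightarrow> (\<Sum>a<\<tau>. cnj (X a j') * S a b') = - (\<Sum>j0<d. Y j0 b' * cnj (T j0 j'))"
    and TiR: "\<And>j0 j. j0 < d \<Longrightarrow> j < d \<Longrightarrow> (\<Sum>j'<d. T j0 j' * Ti j' j) = (if j0 = j then 1 else 0)"
  shows "(\<Sum>a<\<tau>. ((1/q) * (cnj (S a b) - (\<Sum>j<d. \<Sum>j'<d. cnj (Y j b) * cnj (Ti j' j) * cnj (X a j')))) * S a b') = (if b = b' then 1 else 0)"
proof -
  have "(\<Sum>a<\<tau>. \<Sum>j<d. \<Sum>j'<d. cnj (Y j b) * cnj (Ti j' j) * cnj (X a j') * S a b') =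
        (\<Sum>j<d. \<Sum>a<\<tau>. \<Sum>j'<d. cnj (Y j b) * cnj (Ti j' j) * cnj (X a j') * S a b')"
    by (rule sum.swap)
  also have "\<dots> = (\<Sum>j<d. \<Sum>j'<d. \<Sum>a<\<tau>. cnj (Y j b) * cnj (Ti j' j) * cnj (X a j') * S a b')"
    by (rule sum.cong[OF refl], rule sum.swap)
  also have "\<dots> = (\<Sum>j<d. \<Sum>j'<d. cnj (Y j b) * cnj (Ti j' j) * (\<Sum>a<\<tau>. cnj (X a j') * S a b'))"
    by (simp add: sum_distrib_left sum_distrib_right mult_ac)
  also have "\<dots> = (\<Sum>j<d. \<Sum>j'<d. cnj (Y j b) * cnj (Ti j' j) * (- (\<Sum>j0<d. Y j0 b' * cnj (T j0 j'))))"
    using C2 by simp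
  also have "\<dots> = - (\<Sum>j<d. \<Sum>j'<d. \<Sum>j0<d. cnj (Y j b) * Y j0 b' * cnj (T j0 j' * Ti j' j))"
    by (simp add: sum_distrib_left sum_distrib_right sum_negf mult_ac)
  also have "\<dots> = - (\<Sum>j<d. \<Sum>j0<d. \<Sum>j'<d. cnj (Y j b) * Y j0 b' * cnj (T j0 j' * Ti j' j))"
    by (rule arg_cong[where f=uminus], rule sum.cong[OF refl], rule sum.swap)
  also have "\<dots> = - (\<Sum>j<d. \<Sum>j0<d. cnj (Y j b) * Y j0 b' * cnj (\<Sum>j'<d. T j0 j' * Ti j' j))"
    by (simp add: sum_distrib_left cnj_sum)
  also have "\<dots> = - (\<Sum>j<d. \<Sum>j0<d. cnj (Y j b) * Y j0 b' * (if j0 = j then 1 else 0))"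
    using TiR by (intro arg_cong[where f=uminus] sum.cong refl) auto
  also have "\<dots> = - (\<Sum>j<d. cnj (Y j b) * Y j b')"
    by (simp add: if_distrib sum.delta' cong: if_cong)
  finally have e: "(\<Sum>a<\<tau>. \<Sum>j<d. \<Sum>j'<d. cnj (Y j b) * cnj (Ti j' j) * cnj (X a j') * S a b') = - (\<Sum>j<d. cnj (Y j b) * Y j b')" .
  have "(\<Sum>a<\<tau>. ((1/q) * (cnj (S a b) - (\<Sum>j<d. \<Sum>j'<d. cnj (Y j b) * cnj (Ti j' j) * cnj (X a j')))) * S a b') =
     (1/q) * ((\<Sum>a<\<tau>. cnj (S a b) * S a b') - (\<Sum>a<\<tau>. \<Sum>j<d. \<Sum>j'<d. cnj (Y j b) * cnj (Ti j' j) * cnj (X a j') * S a b'))"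
    by (simp add: sum_distrib_left sum_distrib_right left_diff_distrib right_diff_distrib sum_subtractf mult_ac)
  also have "\<dots> = (1/q) * (if b = b' then q else 0)" unfolding e using C1 by simp
  also have "\<dots> = (if b = b' then 1 else 0)" using q by simp
  finally show ?thesis .
qed


subsection \<open>Square submatrices of the discrete Fourier matrix\<close>

definition shifted_dft :: "nat \<Rightarrow> int \<Rightarrow> nat \<Rightarrow> nat \<Rightarrow> complex" where
  "shifted_dft q K e k = uroot q ((int e - K) * int k)"

lemma shifted_dft_rows_orthogonal:
  assumes "0 < q" "e < q" "e' < q"
  shows "(\<Sum>k<q. shifted_dft q K e k * cnj (shifted_dft q K e' k)) = (if e = e' then of_nat q else 0)"
proof -
  have "shifted_dft q K e k * cnj (shifted_dft q K e' k) = uroot q ((int e - int e') * int k)" for k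
    unfolding shifted_dft_def uroot_diff[symmetric] by (simp add: algebra_simps)
  then show ?thesis
    using assms by (simp add: sum_uroot int_dvd_diff_iff_eq)
qed

lemma shifted_dft_cols_orthogonal:
  assumes "0 < q" "k < q" "k' < q"
  shows "(\<Sum>e<q. cnj (shifted_dft q K e k) * shifted_dft q K e k') = (if k = k' then of_nat q else 0)"
proof -
  have "cnj (shifted_dft q K e k) * shifted_dft q K e k'
      = uroot q (- K * (int k' - int k)) * uroot q ((int k' - int k) * int e)" for e
    unfolding shifted_dft_def uroot_add[symmetric] by (simp add: uroot_diff[symmetric] algebra_simps)
  then have "(\<Sum>e<q. cnj (shifted_dft q K e k) * shifted_dft q K e k')
      = uroot q (- K * (int k' - int k)) * (\<Sum>e<q. uroot q ((int k' - int k) * int e))"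
    by (simp add: sum_distrib_left)
  then show ?thesis
    using assms by (simp add: sum_uroot int_dvd_diff_iff_eq)
qed

text \<open>The block of \<open>F\<close> complementary to \<open>G\<close> (rows \<open>\<tau> + j\<close>, columns \<open>u j'\<close>) is a
  column-scaled Vandermonde matrix in the nodes \<open>\<omega>\<^sup>u\<^sup>j\<^sup>'\<close>; \<open>Tinv\<close> is its inverse.\<close>

locale dft_submatrix =
  fixes q \<tau> :: nat and K :: int and i u :: "nat \<Rightarrow> nat"
  assumes tau_pos: "0 < \<tau>" and tau_less: "\<tau> < q"
    and inj_i: "inj_on i {..<\<tau>}" and i_less: "\<And>b. b < \<tau> \<Longrightarrow> i b < q"
    and inj_u: "inj_on u {..<q - \<tau>}" and u_image: "u ` {..<q - \<tau>} = {..<q} - i ` {..<\<tau>}"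
begin

abbreviation "d \<equiv> q - \<tau>"

abbreviation "F \<equiv> shifted_dft q K"

definition G :: "nat \<Rightarrow> nat \<Rightarrow> complex" where
  "G a b = (if a < \<tau> \<and> b < \<tau> then F a (i b) else 0)"

lemma q_pos: "0 < q"
  using tau_less by simp

lemma u_less: "j < d \<Longrightarrow> u j < q"
  using u_image by auto

lemma u_neq_i: "j < d \<Longrightarrow> b < \<tau> \<Longrightarrow> u j \<noteq> i b"
  using u_image by auto

lemma sum_cols_split: "(\<Sum>k<q. h k) = (\<Sum>b<\<tau>. h (i b)) + (\<Sum>j<d. h (u j))"
proof -
  have "i ` {..<\<tau>} \<subseteq> {..<q}"
    using i_less by auto
  then have "(\<Sum>k<q. h k) = (\<Sum>k\<in>u ` {..<d}. h k) + (\<Sum>k\<in>i ` {..<\<tau>}. h k)"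
    unfolding u_image by (rule sum.subset_diff) simp
  also have "\<dots> = (\<Sum>b<\<tau>. h (i b)) + (\<Sum>j<d. h (u j))"
    using inj_i inj_u by (simp add: sum.reindex add.commute)
  finally show ?thesis .
qed

lemma sum_rows_split: "(\<Sum>e<q. h e) = (\<Sum>a<\<tau>. h a) + (\<Sum>j<d. h (\<tau> + j))"
  using sum_lessThan_add_split[of h \<tau> d] tau_less by simp

lemma rows_orthogonal:
  assumes "a < \<tau>" "a' < \<tau>"
  shows "(\<Sum>b<\<tau>. F a (i b) * cnj (F a' (i b))) + (\<Sum>j<d. F a (u j) * cnj (F a' (u j)))
      = (if a = a' then of_nat q else 0)"
  using shifted_dft_rows_orthogonal[OF q_pos, of a a' K] assms tau_less
  by (simp add: sum_cols_split)

lemma rows_orthogonal_complement: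
  assumes "a < \<tau>" "j < d"
  shows "(\<Sum>b<\<tau>. F a (i b) * cnj (F (\<tau> + j) (i b))) = - (\<Sum>j'<d. F a (u j') * cnj (F (\<tau> + j) (u j')))"
  using shifted_dft_rows_orthogonal[OF q_pos, of a "\<tau> + j" K] assms tau_less
  by (simp add: sum_cols_split eq_neg_iff_add_eq_0)

lemma cols_orthogonal:
  assumes "b < \<tau>" "b' < \<tau>"
  shows "(\<Sum>a<\<tau>. cnj (F a (i b)) * F a (i b')) + (\<Sum>j<d. cnj (F (\<tau> + j) (i b)) * F (\<tau> + j) (i b'))
      = (if b = b' then of_nat q else 0)"
proof -
  have "i b = i b' \<longleftrightarrow> b = b'"
    using inj_i assms by (auto simp: inj_on_def)
  then show ?thesis
    using shifted_dft_cols_orthogonal[OF q_pos, of "i b" "i b'" K] assms i_less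
    by (simp add: sum_rows_split)
qed

lemma cols_orthogonal_complement:
  assumes "j' < d" "b < \<tau>"
  shows "(\<Sum>a<\<tau>. cnj (F a (u j')) * F a (i b)) = - (\<Sum>j<d. F (\<tau> + j) (i b) * cnj (F (\<tau> + j) (u j')))"
  using shifted_dft_cols_orthogonal[OF q_pos, of "u j'" "i b" K] assms u_less i_less u_neq_i
  by (simp add: sum_rows_split eq_neg_iff_add_eq_0 mult.commute)


definition node :: "nat \<Rightarrow> complex" where
  "node j = uroot q (int (u j))"

definition Tinv :: "nat \<Rightarrow> nat \<Rightarrow> complex" where
  "Tinv j' j = uroot q (- ((int \<tau> - K) * int (u j'))) * coeff (lagrange_basis node d j') j"

lemma F_complement_block: "F (\<tau> + j) (u j') = uroot q ((int \<tau> - K) * int (u j')) * node j' ^ j"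
  unfolding shifted_dft_def node_def uroot_power uroot_add[symmetric] by (simp add: algebra_simps)

lemma inj_node: "inj_on node {..<d}"
proof -
  have "inj_on (\<lambda>k. uroot q (int k)) (u ` {..<d})"
    using inj_on_subset[OF inj_on_uroot] u_image by blast
  then show ?thesis
    using comp_inj_on[OF inj_u] unfolding node_def o_def by blast
qed

lemma node_separated:
  assumes "j < d" "j' < d" "j \<noteq> j'"
  shows "2 / real q \<le> cmod (node j - node j')"
  using assms norm_uroot_diff_ge[of "u j" q "u j'"] inj_u u_less
  unfolding node_def by (auto simp: inj_on_def)

lemma Tinv_left:
  assumes "j' < d" "j0 < d"
  shows "(\<Sum>j<d. Tinv j' j * F (\<tau> + j) (u j0)) = (if j' = j0 then 1 else 0)"
proof -
  have "(\<Sum>j<d. Tinv j' j * F (\<tau> + j) (u j0))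
      = uroot q (- ((int \<tau> - K) * int (u j'))) * uroot q ((int \<tau> - K) * int (u j0))
        * (\<Sum>j<d. coeff (lagrange_basis node d j') j * node j0 ^ j)"
    unfolding Tinv_def F_complement_block by (simp add: sum_distrib_left mult_ac)
  then show ?thesis
    using assms sum_coeff_lagrange_basis_power[OF inj_node] by (simp add: uroot_cancel)
qed

lemma Tinv_right:
  assumes "j0 < d" "j < d"
  shows "(\<Sum>j'<d. F (\<tau> + j0) (u j') * Tinv j' j) = (if j0 = j then 1 else 0)"
proof -
  have "F (\<tau> + j0) (u j') * Tinv j' j = node j' ^ j0 * coeff (lagrange_basis node d j') j" for j'
    unfolding Tinv_def F_complement_block using uroot_cancel by (simp add: mult_ac)
  then show ?thesis
    using assms sum_power_coeff_lagrange_basis[OF inj_node] by simp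
qed

lemma norm_Tinv_le:
  assumes "j' < d"
  shows "cmod (Tinv j' j) \<le> real q ^ (d - 1)"
proof -
  have "cmod (Tinv j' j) \<le> 2 ^ (d - 1) / (2 / real q) ^ (d - 1)"
    unfolding Tinv_def norm_mult norm_uroot mult.left_neutral using q_pos assms node_separated
    by (intro norm_coeff_lagrange_basis_le) (auto simp: node_def)
  also have "\<dots> = real q ^ (d - 1)"
    using q_pos by (simp add: power_divide)
  finally show ?thesis .
qed

definition Ginv :: "nat \<Rightarrow> nat \<Rightarrow> complex" where
  "Ginv b a = (if b < \<tau> \<and> a < \<tau> then (1 / of_nat q) * (cnj (F a (i b)) -
      (\<Sum>j<d. \<Sum>j'<d. cnj (F (\<tau> + j) (i b)) * cnj (Tinv j' j) * cnj (F a (u j')))) else 0)"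

lemma minv_G: "minv \<tau> G = Ginv"
proof (rule minv_eqI)
  have q: "(of_nat q :: complex) \<noteq> 0"
    using q_pos by simp
  show "mmul \<tau> Ginv G b b' = mid \<tau> b b'" if "b < \<tau>" "b' < \<tau>" for b b'
  proof -
    have "mmul \<tau> Ginv G b b' = (\<Sum>a<\<tau>. ((1 / of_nat q) * (cnj (F a (i b)) -
        (\<Sum>j<d. \<Sum>j'<d. cnj (F (\<tau> + j) (i b)) * cnj (Tinv j' j) * cnj (F a (u j'))))) * F a (i b'))"
      unfolding mmul_def Ginv_def G_def using that by (intro sum.cong) auto
    also have "\<dots> = (if b = b' then 1 else 0)"
      by (rule scaled_unitary_block_inverse_left[OF q cols_orthogonal[OF that]
            cols_orthogonal_complement[OF _ that(2)] Tinv_right])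
    finally show ?thesis
      using that by (simp add: mid_def)
  qed
  show "mmul \<tau> G Ginv a a' = mid \<tau> a a'" if "a < \<tau>" "a' < \<tau>" for a a'
  proof -
    have "mmul \<tau> G Ginv a a' = (\<Sum>b<\<tau>. F a (i b) * ((1 / of_nat q) * (cnj (F a' (i b)) -
        (\<Sum>j<d. \<Sum>j'<d. cnj (F (\<tau> + j) (i b)) * cnj (Tinv j' j) * cnj (F a' (u j'))))))"
      unfolding mmul_def Ginv_def G_def using that by (intro sum.cong) auto
    also have "\<dots> = (if a = a' then 1 else 0)"
      by (rule scaled_unitary_block_inverse_right[OF q rows_orthogonal[OF that]
            rows_orthogonal_complement[OF that(1)] Tinv_left])
    finally show ?thesis
      using that by (simp add: mid_def)
  qed
qed (auto simp: Ginv_def)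

lemma norm_Ginv_le: "cmod (Ginv b a) \<le> (1 + real d * real d * real q ^ (d - 1)) / real q"
proof (cases "b < \<tau> \<and> a < \<tau>")
  case True
  let ?S = "\<Sum>j<d. \<Sum>j'<d. cnj (F (\<tau> + j) (i b)) * cnj (Tinv j' j) * cnj (F a (u j'))"
  have "cmod ?S \<le> (\<Sum>j<d. \<Sum>j'<d. cmod (cnj (F (\<tau> + j) (i b)) * cnj (Tinv j' j) * cnj (F a (u j'))))"
    by (rule order_trans[OF norm_sum sum_mono[OF norm_sum]])
  also have "\<dots> \<le> (\<Sum>j<d. \<Sum>j'<d. real q ^ (d - 1))"
    using norm_Tinv_le by (intro sum_mono) (simp add: norm_mult shifted_dft_def)
  also have "\<dots> = real d * real d * real q ^ (d - 1)"
    by (simp only: sum_constant card_lessThan mult.assoc)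
  finally have "cmod ?S \<le> real d * real d * real q ^ (d - 1)" .
  moreover have "cmod (cnj (F a (i b)) - ?S) \<le> cmod (cnj (F a (i b))) + cmod ?S"
    by (rule norm_triangle_ineq4)
  ultimately have "cmod (cnj (F a (i b)) - ?S) \<le> 1 + real d * real d * real q ^ (d - 1)"
    by (simp add: shifted_dft_def)
  then show ?thesis
    using True q_pos unfolding Ginv_def by (simp add: norm_mult norm_divide divide_right_mono)
next
  case False
  then have "Ginv b a = 0"
    unfolding Ginv_def by meson
  then show ?thesis
    by simp
qed

lemma cond_num_G_le: "cond_num \<tau> G \<le> real \<tau> * (real \<tau> * ((1 + real d * real d * real q ^ (d - 1)) / real q))"
proof -
  have "cmod (G a b) \<le> 1" for a b
    by (simp add: G_def shifted_dft_def)
  then have "0 \<le> sigma_max \<tau> G" "sigma_max \<tau> G \<le> real \<tau> * 1"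
    using sigma_max_bounds[OF tau_pos] by blast+
  moreover have "0 \<le> sigma_max \<tau> Ginv"
    "sigma_max \<tau> Ginv \<le> real \<tau> * ((1 + real d * real d * real q ^ (d - 1)) / real q)"
    using sigma_max_bounds[OF tau_pos, of Ginv, OF norm_Ginv_le] by blast+
  ultimately show ?thesis
    unfolding cond_num_def minv_G by (intro mult_mono) auto
qed

end


lemma complement_enumeration:
  fixes i :: "nat \<Rightarrow> nat" and \<tau> q :: nat
  assumes inj: "inj_on i {..<\<tau>}" and less: "\<And>b. b < \<tau> \<Longrightarrow> i b < q"
  obtains u where "inj_on u {..<q - \<tau>}" "u ` {..<q - \<tau>} = {..<q} - i ` {..<\<tau>}"
proof -
  have "i ` {..<\<tau>} \<subseteq> {..<q}"
    using less by auto
  then have "card ({..<q} - i ` {..<\<tau>}) = q - \<tau>"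
    using card_image[OF inj] by (simp add: card_Diff_subset)
  then obtain u where "bij_betw u {..<q - \<tau>} ({..<q} - i ` {..<\<tau>})"
    by (metis card_lessThan finite_Diff finite_lessThan finite_same_card_bij)
  then show ?thesis
    using that by (auto simp: bij_betw_def)
qed

lemma dft_submatrix_bound_le_powr:
  fixes q \<tau> :: nat
  assumes "\<tau> < q"
  shows "real \<tau> * (real \<tau> * ((1 + real (q - \<tau>) * real (q - \<tau>) * real q ^ (q - \<tau> - 1)) / real q))
     \<le> 2 * real q powr (real q - real \<tau> + 5.5)"
proof -
  define d where "d = q - \<tau>"
  have d: "1 \<le> d" "real d \<le> real q" and q: "1 \<le> real q" and \<tau>: "real \<tau> \<le> real q"
    using assms unfolding d_def by auto
  have "real d * real d * real q ^ (d - 1) \<le> real q * real q * real q ^ (d - 1)"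
    using d by (intro mult_right_mono mult_mono) auto
  also have "\<dots> = real q ^ (d + 1)"
    using d by (simp add: power_add[symmetric] power2_eq_square[symmetric] mult.commute)
  finally have "1 + real d * real d * real q ^ (d - 1) \<le> 2 * real q ^ (d + 1)"
    using one_le_power[OF q, of "d + 1"] by linarith
  then have "real \<tau> * (real \<tau> * ((1 + real d * real d * real q ^ (d - 1)) / real q))
      \<le> real q * (real q * (2 * real q ^ (d + 1) / real q))"
    using q \<tau> by (intro mult_mono divide_right_mono) auto
  also have "\<dots> = 2 * real q ^ (d + 2)"
    using q by (simp add: power_add power2_eq_square)
  also have "\<dots> = 2 * real q powr (real d + 2)"
    using powr_realpow[of "real q" "d + 2"] q by (simp add: add.commute)
  also have "\<dots> \<le> 2 * real q powr (real d + 5.5)"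
    using q by (intro mult_left_mono powr_mono) auto
  finally show ?thesis
    using assms unfolding d_def by (simp add: of_nat_diff)
qed

lemma cond_num_Gvand_le:
  fixes p kA kB q :: nat and i :: "nat \<Rightarrow> nat"
  defines "\<tau> \<equiv> 2 * p * kA * kB - 1"
  assumes "0 < p" "0 < kA" "0 < kB" "\<tau> < q"
    and inj: "inj_on i {..<\<tau>}" and less: "\<And>b. b < \<tau> \<Longrightarrow> i b < q"
  shows "cond_num \<tau> (Gvand q p kA kB i) \<le> 2 * real q powr (real q - real \<tau> + 5.5)"
proof -
  obtain u where "inj_on u {..<q - \<tau>}" "u ` {..<q - \<tau>} = {..<q} - i ` {..<\<tau>}"
    using complement_enumeration[OF inj less] by blast
  moreover have "0 < p * kA * kB"
    using assms(2-4) by simp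
  then have "0 < \<tau>"
    unfolding \<tau>_def by linarith
  ultimately interpret dft_submatrix q \<tau> "int (p * kA * kB) - 1" i u
    using assms by unfold_locales auto
  have "Gvand q p kA kB i = G"
  proof (intro ext)
    fix a b
    show "Gvand q p kA kB i a b = G a b"
      unfolding Gvand_def G_def shifted_dft_def uroot_def \<tau>_def[symmetric]
      by (simp add: cis_power_int mult_ac)
  qed
  then show ?thesis
    using cond_num_G_le dft_submatrix_bound_le_powr[OF \<open>\<tau> < q\<close>] by simp
qed

subsection \<open>The worker outputs as polynomials in a root of unity\<close>

lemma sum_cartesian_product3: "(\<Sum>i\<in>A. \<Sum>j\<in>B. \<Sum>l\<in>C. f i j l) = (\<Sum>(i,j,l)\<in>A\<times>B\<times>C. f i j l)"
  by (simp add: sum.cartesian_product)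

lemma mmul_kron_mid_vstack:
  assumes z: "0 < \<zeta>" and s: "s < 2 * \<zeta>"
  shows "mmul (2 * \<zeta>) (kron \<zeta> \<zeta> R (mid \<zeta>)) (vstack \<zeta> X Y) s x =
         R (s div \<zeta>) 0 * X (s mod \<zeta>) x + R (s div \<zeta>) 1 * Y (s mod \<zeta>) x"
proof -
  have sm: "s mod \<zeta> < \<zeta>" using z by simp
  have "mmul (2 * \<zeta>) (kron \<zeta> \<zeta> R (mid \<zeta>)) (vstack \<zeta> X Y) s x =
        (\<Sum>c<\<zeta> + \<zeta>. kron \<zeta> \<zeta> R (mid \<zeta>) s c * vstack \<zeta> X Y c x)"
    unfolding mmul_def by (simp add: mult_2)
  also have "\<dots> = (\<Sum>c<\<zeta>. kron \<zeta> \<zeta> R (mid \<zeta>) s c * vstack \<zeta> X Y c x) +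
                  (\<Sum>c<\<zeta>. kron \<zeta> \<zeta> R (mid \<zeta>) s (\<zeta> + c) * vstack \<zeta> X Y (\<zeta> + c) x)"
    by (rule sum_lessThan_add_split)
  also have "(\<Sum>c<\<zeta>. kron \<zeta> \<zeta> R (mid \<zeta>) s c * vstack \<zeta> X Y c x) =
             (\<Sum>c<\<zeta>. if s mod \<zeta> = c then R (s div \<zeta>) 0 * X c x else 0)"
    by (intro sum.cong refl) (auto simp: kron_def mid_def vstack_def sm)
  also have "(\<Sum>c<\<zeta>. kron \<zeta> \<zeta> R (mid \<zeta>) s (\<zeta> + c) * vstack \<zeta> X Y (\<zeta> + c) x) =
             (\<Sum>c<\<zeta>. if s mod \<zeta> = c then R (s div \<zeta>) 1 * Y c x else 0)"
  proof (intro sum.cong refl)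
    fix c assume c: "c \<in> {..<\<zeta>}"
    have "(\<zeta> + c) div \<zeta> = 1" "(\<zeta> + c) mod \<zeta> = c" using c z by auto
    then show "kron \<zeta> \<zeta> R (mid \<zeta>) s (\<zeta> + c) * vstack \<zeta> X Y (\<zeta> + c) x =
             (if s mod \<zeta> = c then R (s div \<zeta>) 1 * Y c x else 0)"
      using c by (auto simp: kron_def mid_def vstack_def sm)
  qed
  finally show ?thesis using sm by (simp add: sum.delta)
qed

lemma sum_lessThan_2: "(\<Sum>l<2. f l) = f 0 + f (1::nat)"
  by (simp add: numeral_2_eq_2)

lemma encA_eq:
  fixes \<zeta> :: nat
  assumes z: "\<zeta> = t div (2*p)" "0 < \<zeta>" and s: "s < 2 * \<zeta>"
  shows "encA q p kA t r k A s x = (\<Sum>(i,j,l)\<in>{..<p}\<times>{..<kA}\<times>{..<2}.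
     rot (of_int (int k * ((int j - 1) * int p + int i + 1)) * (- (2*pi/real q))) (s div \<zeta>) l *
       A ((2*i+l) * \<zeta> + s mod \<zeta>) (j * (r div kA) + x))"
proof -
  have "encA q p kA t r k A s x = (\<Sum>i<p. \<Sum>j<kA. \<Sum>l<2.
     rot (of_int (int k * ((int j - 1) * int p + int i + 1)) * (- (2*pi/real q))) (s div \<zeta>) l *
       A ((2*i+l) * \<zeta> + s mod \<zeta>) (j * (r div kA) + x))"
    unfolding encA_def Let_def z(1)[symmetric]
    by (simp add: mmul_kron_mid_vstack[OF z(2) s] mipow_rot blk_def bidx_def sum_lessThan_2)
  also have "\<dots> = (\<Sum>(i,j,l)\<in>{..<p}\<times>{..<kA}\<times>{..<2}.
     rot (of_int (int k * ((int j - 1) * int p + int i + 1)) * (- (2*pi/real q))) (s div \<zeta>) l *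
       A ((2*i+l) * \<zeta> + s mod \<zeta>) (j * (r div kA) + x))"
    by (rule sum_cartesian_product3)
  finally show ?thesis .
qed

lemma encB_eq:
  fixes \<zeta> :: nat
  assumes z: "\<zeta> = t div (2*p)" "0 < \<zeta>" and s: "s < 2 * \<zeta>"
  shows "encB q p kA kB t w k B s y = (\<Sum>(i,j,l)\<in>{..<p}\<times>{..<kB}\<times>{..<2}.
     rot (of_int (int k * (int p - 1 - int i + int j * int p * int kA)) * (2*pi/real q)) (s div \<zeta>) l *
       B ((2*i+l) * \<zeta> + s mod \<zeta>) (j * (w div kB) + y))"
proof -
  have "encB q p kA kB t w k B s y = (\<Sum>i<p. \<Sum>j<kB. \<Sum>l<2.
     rot (of_int (int k * (int p - 1 - int i + int j * int p * int kA)) * (2*pi/real q)) (s div \<zeta>) l *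
       B ((2*i+l) * \<zeta> + s mod \<zeta>) (j * (w div kB) + y))"
    unfolding encB_def Let_def z(1)[symmetric]
    by (simp add: mmul_kron_mid_vstack[OF z(2) s] mipow_rot blk_def bidx_def sum_lessThan_2)
  also have "\<dots> = (\<Sum>(i,j,l)\<in>{..<p}\<times>{..<kB}\<times>{..<2}.
     rot (of_int (int k * (int p - 1 - int i + int j * int p * int kA)) * (2*pi/real q)) (s div \<zeta>) l *
       B ((2*i+l) * \<zeta> + s mod \<zeta>) (j * (w div kB) + y))"
    by (rule sum_cartesian_product3)
  finally show ?thesis .
qed


lemma sum_kron_blocks:
  fixes g :: "nat \<Rightarrow> real"
  shows "(\<Sum>s<2 * \<zeta>. R (s div \<zeta>) l * g (s mod \<zeta>) * (S (s div \<zeta>) l' * h (s mod \<zeta>))) =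
         (R 0 l * S 0 l' + R 1 l * S 1 l') * (\<Sum>s<\<zeta>. g s * h s)"
proof (cases "\<zeta> = 0")
  case False
  have "(\<Sum>s<2 * \<zeta>. R (s div \<zeta>) l * g (s mod \<zeta>) * (S (s div \<zeta>) l' * h (s mod \<zeta>))) =
     (\<Sum>s<\<zeta>. R 0 l * g s * (S 0 l' * h s)) + (\<Sum>s<\<zeta>. R 1 l * g s * (S 1 l' * h s))"
    unfolding mult_2 sum_lessThan_add_split using False by (intro arg_cong2[where f = "(+)"] sum.cong) auto
  also have "\<dots> = (R 0 l * S 0 l' + R 1 l * S 1 l') * (\<Sum>s<\<zeta>. g s * h s)"
    by (simp add: sum_distrib_left sum_distrib_right distrib_left mult_ac)
  finally show ?thesis .
qed simp

text \<open>Blocks are indexed by triples \<open>(i, j, l)\<close>: \<open>\<langle>i, l\<rangle>\<close> is the block row \<open>2 i + l\<close> and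
  \<open>j\<close> the block column. \<open>block_inner\<close> is the \<open>(x, y)\<close> entry of \<open>A\<^sub>a\<^sup>T B\<^sub>b\<close>.\<close>

definition rot_exponent :: "nat \<Rightarrow> nat \<Rightarrow> nat \<times> nat \<times> nat \<Rightarrow> nat \<times> nat \<times> nat \<Rightarrow> int" where
  "rot_exponent p kA a b = (case a of (ia, ja, la) \<Rightarrow> case b of (ib, jb, lb) \<Rightarrow>
     int ja * int p + int ia - int ib + int jb * int p * int kA)"

definition block_inner :: "nat \<Rightarrow> nat \<Rightarrow> nat \<Rightarrow> (nat \<Rightarrow> nat \<Rightarrow> real) \<Rightarrow> (nat \<Rightarrow> nat \<Rightarrow> real) \<Rightarrow> nat \<Rightarrow> nat \<Rightarrow>
    nat \<times> nat \<times> nat \<Rightarrow> nat \<times> nat \<times> nat \<Rightarrow> real" where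
  "block_inner \<zeta> cA cB A B x y a b = (case a of (ia, ja, la) \<Rightarrow> case b of (ib, jb, lb) \<Rightarrow>
     (\<Sum>s0<\<zeta>. A ((2*ia+la) * \<zeta> + s0) (ja * cA + x) * B ((2*ib+lb) * \<zeta> + s0) (jb * cB + y)))"

lemma sum_rot_block_products:
  assumes "la < 2" "lb < 2"
  shows "(\<Sum>s<2 * \<zeta>. rot \<phi>A (s div \<zeta>) la * A ((2 * ia + la) * \<zeta> + s mod \<zeta>) (ja * cA + x)
           * (rot \<phi>B (s div \<zeta>) lb * B ((2 * ib + lb) * \<zeta> + s mod \<zeta>) (jb * cB + y)))
       = rot (\<phi>B - \<phi>A) la lb * block_inner \<zeta> cA cB A B x y (ia, ja, la) (ib, jb, lb)"
  using sum_kron_blocks[where R = "rot \<phi>A" and S = "rot \<phi>B" and l = la and l' = lb and \<zeta> = \<zeta>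
      and g = "\<lambda>s. A ((2 * ia + la) * \<zeta> + s) (ja * cA + x)" and h = "\<lambda>s. B ((2 * ib + lb) * \<zeta> + s) (jb * cB + y)"]
  unfolding block_inner_def rot_transpose_mmul[OF assms] by simp

lemma worker_out_eq_sum_rot:
  fixes \<zeta> :: nat
  assumes z: "\<zeta> = t div (2*p)"
  shows "worker_out q p kA kB t r w A B k x y =
    (\<Sum>a\<in>{..<p}\<times>{..<kA}\<times>{..<2}. \<Sum>b\<in>{..<p}\<times>{..<kB}\<times>{..<2}.
       rot (2*pi/real q * of_int (int k * rot_exponent p kA a b)) (snd (snd a)) (snd (snd b)) *
       block_inner \<zeta> (r div kA) (w div kB) A B x y a b)"
proof -
  define IA where "IA = {..<p}\<times>{..<kA}\<times>{..<(2::nat)}"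
  define IB where "IB = {..<p}\<times>{..<kB}\<times>{..<(2::nat)}"
  define fA where "fA a s = (case a of (i,j,l) \<Rightarrow>
     rot (of_int (int k * ((int j - 1) * int p + int i + 1)) * (- (2*pi/real q))) (s div \<zeta>) l *
       A ((2*i+l) * \<zeta> + s mod \<zeta>) (j * (r div kA) + x))" for a s
  define fB where "fB b s = (case b of (i,j,l) \<Rightarrow>
     rot (of_int (int k * (int p - 1 - int i + int j * int p * int kA)) * (2*pi/real q)) (s div \<zeta>) l *
       B ((2*i+l) * \<zeta> + s mod \<zeta>) (j * (w div kB) + y))" for b s
  have "worker_out q p kA kB t r w A B k x y = (\<Sum>s<2*\<zeta>. (\<Sum>a\<in>IA. fA a s) * (\<Sum>b\<in>IB. fB b s))"
    unfolding worker_out_def mmul_def mtrans_def z[symmetric] IA_def IB_def fA_def fB_def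
    by (intro sum.cong refl) (simp add: encA_eq[OF z] encB_eq[OF z] case_prod_beta)
  also have "\<dots> = (\<Sum>a\<in>IA. \<Sum>b\<in>IB. \<Sum>s<2*\<zeta>. fA a s * fB b s)"
    unfolding sum_product by (subst sum.swap, rule sum.cong[OF refl], rule sum.swap)
  also have "\<dots> = (\<Sum>a\<in>IA. \<Sum>b\<in>IB.
       rot (2*pi/real q * of_int (int k * rot_exponent p kA a b)) (snd (snd a)) (snd (snd b)) *
       block_inner \<zeta> (r div kA) (w div kB) A B x y a b)"
  proof (intro sum.cong refl)
    fix a b
    assume "a \<in> IA" "b \<in> IB"
    then obtain ia ja la ib jb lb where ab: "a = (ia, ja, la)" "b = (ib, jb, lb)" and l: "la < 2" "lb < 2"
      unfolding IA_def IB_def by auto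
    \<comment> \<open>the exponents of the two rotations add up to the exponent of the pair\<close>
    have "of_int (int k * (int p - 1 - int ib + int jb * int p * int kA)) * (2*pi/real q)
        - of_int (int k * ((int ja - 1) * int p + int ia + 1)) * (- (2*pi/real q))
        = 2*pi/real q * of_int (int k * rot_exponent p kA a b)"
      unfolding ab rot_exponent_def by (simp add: algebra_simps add_divide_distrib diff_divide_distrib)
    then show "(\<Sum>s<2*\<zeta>. fA a s * fB b s) = rot (2*pi/real q * of_int (int k * rot_exponent p kA a b))
        (snd (snd a)) (snd (snd b)) * block_inner \<zeta> (r div kA) (w div kB) A B x y a b"
      unfolding fA_def fB_def ab prod.case sum_rot_block_products[OF l] by simp
  qed
  finally show ?thesis
    unfolding IA_def IB_def .
qed


definition rot_coeff :: "nat \<Rightarrow> nat \<Rightarrow> complex" where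
  "rot_coeff l l' = (if l = l' then 1/2 else if l = 0 then \<i>/2 else - \<i>/2)"

lemma rot_eq_uroot:
  assumes "l < 2" "l' < 2"
  shows "complex_of_real (rot (2*pi/real q * of_int M) l l') = rot_coeff l l' * uroot q M + cnj (rot_coeff l l') * uroot q (- M)"
proof -
  have ang: "2 * pi * of_int M / real q = 2*pi/real q * of_int M" by simp
  have ang2: "2 * pi * of_int (- M) / real q = - (2*pi/real q * of_int M)" by simp
  show ?thesis
    using assms unfolding uroot_def ang ang2
    by (cases "l = 0"; cases "l' = 0")
       (auto simp: rot_def rot_coeff_def complex_eq_iff cis.sel)
qed

text \<open>With \<open>K = p k\<^sub>A k\<^sub>B - 1\<close> and \<open>z = \<omega>\<^sup>k\<close>, \<open>z\<^sup>K\<close> times the \<open>(x, y)\<close> entry of the output of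
  worker \<open>k\<close> is a polynomial in \<open>z\<close> of degree \<open>< 2 p k\<^sub>A k\<^sub>B - 1\<close>; these are its coefficients.\<close>

definition out_coeff :: "nat \<Rightarrow> nat \<Rightarrow> nat \<Rightarrow> nat \<Rightarrow> nat \<Rightarrow> nat \<Rightarrow> (nat \<Rightarrow> nat \<Rightarrow> real) \<Rightarrow> (nat \<Rightarrow> nat \<Rightarrow> real) \<Rightarrow> nat \<Rightarrow> nat \<Rightarrow> nat \<Rightarrow> complex" where
  "out_coeff p kA kB t r w A B x y n =
    (\<Sum>a\<in>{..<p}\<times>{..<kA}\<times>{..<2}. \<Sum>b\<in>{..<p}\<times>{..<kB}\<times>{..<2}.
       of_real (block_inner (t div (2*p)) (r div kA) (w div kB) A B x y a b) *
       (rot_coeff (snd (snd a)) (snd (snd b)) * (if int n = int (p*kA*kB) - 1 + rot_exponent p kA a b then 1 else 0) +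
        cnj (rot_coeff (snd (snd a)) (snd (snd b))) * (if int n = int (p*kA*kB) - 1 - rot_exponent p kA a b then 1 else 0)))"

lemma rot_exponent_bounds:
  assumes a: "a \<in> {..<p}\<times>{..<kA}\<times>{..<2}" and b: "b \<in> {..<p}\<times>{..<kB}\<times>{..<(2::nat)}"
  shows "- (int p - 1) \<le> rot_exponent p kA a b \<and> rot_exponent p kA a b \<le> int (p*kA*kB) - 1"
proof -
  obtain ia ja la where av: "a = (ia, ja, la)" by (cases a) auto
  obtain ib jb lb where bv: "b = (ib, jb, lb)" by (cases b) auto
  have h: "ia < p" "ja < kA" "ib < p" "jb < kB" using a b av bv by auto
  have f1: "int ja * int p + int p \<le> int kA * int p"
    using h mult_right_mono[of "int ja + 1" "int kA" "int p"] by (simp add: algebra_simps)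
  have f2: "int jb * (int kA * int p) + int kA * int p \<le> int kB * (int kA * int p)"
    using h mult_right_mono[of "int jb + 1" "int kB" "int kA * int p"] by (simp add: algebra_simps)
  have f3: "0 \<le> int ja * int p" "0 \<le> int jb * (int kA * int p)" by auto
  have f4: "int kA * int p \<le> int kB * (int kA * int p)"
    using h mult_right_mono[of 1 "int kB" "int kA * int p"] by simp
  have m: "rot_exponent p kA a b = int ja * int p + int ia - int ib + int jb * (int kA * int p)"
    unfolding av bv rot_exponent_def by (simp add: mult_ac)
  have P: "int (p*kA*kB) = int kB * (int kA * int p)" by (simp add: mult_ac)
  show ?thesis unfolding m P using f1 f2 f3 f4 h by linarith
qed

lemma sum_if_int_eq:
  fixes f :: "nat \<Rightarrow> 'a::comm_monoid_add"
  assumes "0 \<le> E" "E < int N"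
  shows "(\<Sum>n<N. if int n = E then f n else 0) = f (nat E)"
proof -
  have "(\<Sum>n<N. if int n = E then f n else 0) = (\<Sum>n<N. if n = nat E then f n else 0)"
    using assms by (intro sum.cong refl) auto
  also have "\<dots> = f (nat E)"
    using assms by (simp add: sum.delta' nat_less_iff)
  finally show ?thesis .
qed

lemma sum_symmetric_coeffs_uroot:
  fixes c :: complex and K m k :: int
  assumes "\<bar>m\<bar> \<le> K" "int N = 2 * K + 1"
  shows "(\<Sum>n<N. (c * (if int n = K + m then 1 else 0) + cnj c * (if int n = K - m then 1 else 0))
            * uroot q (k * int n))
       = uroot q (k * K) * (c * uroot q (k * m) + cnj c * uroot q (- (k * m)))"
proof -
  have "(\<Sum>n<N. (c * (if int n = K + m then 1 else 0) + cnj c * (if int n = K - m then 1 else 0))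
            * uroot q (k * int n))
      = (\<Sum>n<N. if int n = K + m then c * uroot q (k * int n) else 0)
        + (\<Sum>n<N. if int n = K - m then cnj c * uroot q (k * int n) else 0)"
    by (simp only: sum.distrib[symmetric]) (intro sum.cong refl, simp add: distrib_right)
  also have "\<dots> = c * uroot q (k * (K + m)) + cnj c * uroot q (k * (K - m))"
    using assms by (simp add: sum_if_int_eq abs_le_iff)
  also have "\<dots> = uroot q (k * K) * (c * uroot q (k * m) + cnj c * uroot q (- (k * m)))"
    by (simp add: uroot_add[symmetric] algebra_simps)
  finally show ?thesis .
qed

lemma sum_out_coeff_uroot:
  assumes p: "0 < p" "0 < kA" "0 < kB"
  shows "(\<Sum>n<2*p*kA*kB - 1. out_coeff p kA kB t r w A B x y n * uroot q (int k * int n)) =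
    uroot q (int k * (int (p*kA*kB) - 1)) * of_real (worker_out q p kA kB t r w A B k x y)"
proof -
  define K where "K = int (p*kA*kB) - 1"
  define N where "N = 2*p*kA*kB - 1"
  define IA where "IA = {..<p}\<times>{..<kA}\<times>{..<(2::nat)}"
  define IB where "IB = {..<p}\<times>{..<kB}\<times>{..<(2::nat)}"
  define D where "D = block_inner (t div (2*p)) (r div kA) (w div kB) A B x y"
  have "p \<le> p*kA*kB"
    using p by simp
  then have Kp: "int p - 1 \<le> K"
    unfolding K_def by linarith
  have NK: "int N = 2 * K + 1"
    unfolding N_def K_def using p by (simp add: of_nat_diff)
  have pair: "(\<Sum>n<N. of_real (D a b) * (rot_coeff (snd (snd a)) (snd (snd b)) * (if int n = K + rot_exponent p kA a b then 1 else 0) +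
        cnj (rot_coeff (snd (snd a)) (snd (snd b))) * (if int n = K - rot_exponent p kA a b then 1 else 0)) * uroot q (int k * int n))
      = uroot q (int k * K) * of_real (D a b * rot (2*pi/real q * of_int (int k * rot_exponent p kA a b)) (snd (snd a)) (snd (snd b)))"
    if "a \<in> IA" "b \<in> IB" for a b
  proof -
    have "\<bar>rot_exponent p kA a b\<bar> \<le> K"
      using rot_exponent_bounds[of a p kA b kB] that Kp unfolding IA_def IB_def K_def by auto
    moreover have "snd (snd a) < 2" "snd (snd b) < 2"
      using that unfolding IA_def IB_def by auto
    ultimately have "complex_of_real (rot (2*pi/real q * of_int (int k * rot_exponent p kA a b)) (snd (snd a)) (snd (snd b)))
        = rot_coeff (snd (snd a)) (snd (snd b)) * uroot q (int k * rot_exponent p kA a b)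
          + cnj (rot_coeff (snd (snd a)) (snd (snd b))) * uroot q (- (int k * rot_exponent p kA a b))"
      and "\<bar>rot_exponent p kA a b\<bar> \<le> K"
      by (blast intro: rot_eq_uroot)+
    then show ?thesis
      using sum_symmetric_coeffs_uroot[OF _ NK, of "rot_exponent p kA a b" "rot_coeff (snd (snd a)) (snd (snd b))" q "int k"]
      by (simp only: mult.assoc sum_distrib_left[symmetric]) (simp add: mult.left_commute)
  qed
  have "(\<Sum>n<N. out_coeff p kA kB t r w A B x y n * uroot q (int k * int n)) =
      (\<Sum>a\<in>IA. \<Sum>b\<in>IB. \<Sum>n<N. of_real (D a b) * (rot_coeff (snd (snd a)) (snd (snd b)) * (if int n = K + rot_exponent p kA a b then 1 else 0) +
        cnj (rot_coeff (snd (snd a)) (snd (snd b))) * (if int n = K - rot_exponent p kA a b then 1 else 0)) * uroot q (int k * int n))"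
    unfolding out_coeff_def K_def IA_def IB_def D_def sum_distrib_right
    by (subst sum.swap, rule sum.cong[OF refl], rule sum.swap)
  also have "\<dots> = uroot q (int k * K) * of_real (worker_out q p kA kB t r w A B k x y)"
    unfolding worker_out_eq_sum_rot[OF refl] IA_def[symmetric] IB_def[symmetric] D_def[symmetric]
    using pair by (simp add: sum_distrib_left mult_ac)
  finally show ?thesis
    unfolding N_def K_def .
qed

lemma abs_mult_less_imp_eq_0:
  fixes n u :: int
  assumes "0 < n" "\<bar>n * u\<bar> < n"
  shows "u = 0"
proof (rule ccontr)
  assume "u \<noteq> 0"
  then have "n * 1 \<le> n * \<bar>u\<bar>"
    using assms by (intro mult_left_mono) auto
  with assms show False
    by (simp add: abs_mult)
qed

text \<open>The exponent is a mixed-radix number with digits \<open>i\<^sub>A - i\<^sub>B\<close>, \<open>j\<^sub>A\<close>, \<open>j\<^sub>B\<close>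
  (radices \<open>p\<close> and \<open>p k\<^sub>A\<close>), so it determines the block pair up to \<open>i\<^sub>A = i\<^sub>B\<close>.\<close>

lemma rot_exponent_eq_iff:
  assumes "ia < p" "ib < p" "ja < kA" "j0 < kA"
  shows "rot_exponent p kA (ia, ja, la) (ib, jb, lb) = int j0 * int p + int j0' * int p * int kA
     \<longleftrightarrow> ia = ib \<and> ja = j0 \<and> jb = j0'"
proof
  assume h: "rot_exponent p kA (ia, ja, la) (ib, jb, lb) = int j0 * int p + int j0' * int p * int kA"
  define u where "u = (int j0 - int ja) + int kA * (int j0' - int jb)"
  have e: "int ia - int ib = int p * u"
    using h unfolding u_def rot_exponent_def by (simp add: algebra_simps)
  have "u = 0"
    using assms e by (intro abs_mult_less_imp_eq_0[of "int p"]) auto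
  then have e2: "int j0 - int ja = int kA * (int jb - int j0')"
    unfolding u_def by (simp add: algebra_simps)
  have "int jb - int j0' = 0"
    using assms e2 by (intro abs_mult_less_imp_eq_0[of "int kA"]) auto
  then show "ia = ib \<and> ja = j0 \<and> jb = j0'"
    using e e2 \<open>u = 0\<close> by simp
qed (simp add: rot_exponent_def)

lemma rot_exponent_eq_neg_iff:
  assumes "ia < p" "ib < p" "0 < kA"
  shows "rot_exponent p kA (ia, ja, la) (ib, jb, lb) = - (int j0 * int p + int j0' * int p * int kA)
     \<longleftrightarrow> ia = ib \<and> ja = 0 \<and> jb = 0 \<and> j0 = 0 \<and> j0' = 0"
proof
  assume h: "rot_exponent p kA (ia, ja, la) (ib, jb, lb) = - (int j0 * int p + int j0' * int p * int kA)"
  define u where "u = int ja + int j0 + int kA * (int jb + int j0')"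
  have e: "int ib - int ia = int p * u"
    using h unfolding u_def rot_exponent_def by (simp add: algebra_simps)
  moreover have "0 \<le> u"
    unfolding u_def by simp
  ultimately have "\<bar>int p * u\<bar> < int p"
    using assms by linarith
  then have "u = 0"
    using assms by (intro abs_mult_less_imp_eq_0[of "int p"]) auto
  then show "ia = ib \<and> ja = 0 \<and> jb = 0 \<and> j0 = 0 \<and> j0' = 0"
    using e assms(3) unfolding u_def by (auto simp: add_nonneg_eq_0_iff)
qed (simp add: rot_exponent_def)

lemma sum_row_blocks:
  fixes f :: "nat \<Rightarrow> 'a::comm_monoid_add"
  shows "(\<Sum>i<p. \<Sum>l<2. \<Sum>s<\<zeta>. f ((2 * i + l) * \<zeta> + s)) = (\<Sum>s<2 * p * \<zeta>. f s)"
proof (induction p)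
  case 0
  then show ?case
    by simp
next
  case (Suc p)
  have "(\<Sum>s<2 * Suc p * \<zeta>. f s) = (\<Sum>s<2 * p * \<zeta>. f s) + (\<Sum>s<\<zeta> + \<zeta>. f (2 * p * \<zeta> + s))"
    using sum_lessThan_add_split[of f "2 * p * \<zeta>" "\<zeta> + \<zeta>"] by (simp add: algebra_simps)
  also have "(\<Sum>s<\<zeta> + \<zeta>. f (2 * p * \<zeta> + s)) = (\<Sum>l<2. \<Sum>s<\<zeta>. f ((2 * p + l) * \<zeta> + s))"
    unfolding sum_lessThan_add_split by (simp add: sum_lessThan_2 algebra_simps)
  finally show ?case
    using Suc by simp
qed

lemma Re_rot_coeff: "Re (rot_coeff l l') = (if l = l' then 1 / 2 else 0)"
  by (auto simp: rot_coeff_def)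

text \<open>The coefficient of index \<open>K + m\<^sub>0\<close> receives the pairs with \<open>m\<^sub>a\<^sub>b = m\<^sub>0\<close> and, through
  the conjugate term, those with \<open>m\<^sub>a\<^sub>b = -m\<^sub>0\<close>; the latter exist only for \<open>m\<^sub>0 = 0\<close>, when they
  coincide with the former, which explains the factor \<open>2\<close>.\<close>

lemma out_coeff_weight:
  fixes a b :: "nat \<times> nat \<times> nat" and d :: real
  assumes "0 < p" "0 < kA" and a: "a \<in> {..<p} \<times> {..<kA} \<times> {..<2}" and b: "b \<in> {..<p} \<times> {..<kB} \<times> {..<2}"
    and j: "j0 < kA" "j0' < kB" and K: "0 \<le> K"
  defines "m0 \<equiv> int j0 * int p + int j0' * int p * int kA"
  shows "Re (of_real d *
      (rot_coeff (snd (snd a)) (snd (snd b)) * (if int (nat (K + m0)) = K + rot_exponent p kA a b then 1 else 0)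
       + cnj (rot_coeff (snd (snd a)) (snd (snd b))) * (if int (nat (K + m0)) = K - rot_exponent p kA a b then 1 else 0)))
      * (if m0 = 0 then 1 else 2)
    = d * (if snd (snd a) = snd (snd b) \<and> fst a = fst b \<and> fst (snd a) = j0 \<and> fst (snd b) = j0' then 1 else 0)"
proof -
  obtain ia ja la ib jb lb where ab: "a = (ia, ja, la)" "b = (ib, jb, lb)"
    by (cases a, cases b) auto
  have "0 \<le> m0"
    unfolding m0_def by simp
  then have n0: "int (nat (K + m0)) = K + m0"
    using K by simp
  have "rot_exponent p kA a b = m0 \<longleftrightarrow> ia = ib \<and> ja = j0 \<and> jb = j0'"
    unfolding ab m0_def using rot_exponent_eq_iff[of ia p ib ja kA j0] a b j ab by simp
  moreover have "rot_exponent p kA a b = - m0 \<longleftrightarrow> ia = ib \<and> ja = 0 \<and> jb = 0 \<and> j0 = 0 \<and> j0' = 0"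
    unfolding ab m0_def using rot_exponent_eq_neg_iff[of ia p ib kA] a b ab assms(2) by simp
  moreover have "int (nat (K + m0)) = K + rot_exponent p kA a b \<longleftrightarrow> rot_exponent p kA a b = m0"
    "int (nat (K + m0)) = K - rot_exponent p kA a b \<longleftrightarrow> rot_exponent p kA a b = - m0"
    unfolding n0 by auto
  moreover have "m0 = 0 \<longleftrightarrow> j0 = 0 \<and> j0' = 0"
    unfolding m0_def using assms(1,2) by (auto simp: add_nonneg_eq_0_iff)
  ultimately show ?thesis
    using ab by (auto simp: Re_rot_coeff)
qed

lemma Re_out_coeff_eq_sum_aligned:
  assumes "0 < p" "0 < kA" "0 < kB" and j: "j0 < kA" "j0' < kB"
  defines "m0 \<equiv> int j0 * int p + int j0' * int p * int kA"
  shows "Re (out_coeff p kA kB t r w A B x y (nat (int (p * kA * kB) - 1 + m0))) * (if m0 = 0 then 1 else 2)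
    = (\<Sum>a\<in>{..<p} \<times> {..<kA} \<times> {..<2}. \<Sum>b\<in>{..<p} \<times> {..<kB} \<times> {..<2}.
        block_inner (t div (2 * p)) (r div kA) (w div kB) A B x y a b *
        (if snd (snd a) = snd (snd b) \<and> fst a = fst b \<and> fst (snd a) = j0 \<and> fst (snd b) = j0' then 1 else 0))"
proof -
  have "0 \<le> int (p * kA * kB) - 1"
    using assms(1-3) by simp
  then show ?thesis
    unfolding out_coeff_def Re_sum sum_distrib_right m0_def
    by (intro sum.cong refl out_coeff_weight[OF assms(1,2) _ _ j]) auto
qed

lemma sum_aligned_block_inner:
  assumes "j0 < kA" "j0' < kB" "t = 2 * p * (t div (2 * p))"
  shows "(\<Sum>a\<in>{..<p} \<times> {..<kA} \<times> {..<2}. \<Sum>b\<in>{..<p} \<times> {..<kB} \<times> {..<2}.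
        block_inner (t div (2 * p)) (r div kA) (w div kB) A B x y a b *
        (if snd (snd a) = snd (snd b) \<and> fst a = fst b \<and> fst (snd a) = j0 \<and> fst (snd b) = j0' then 1 else 0))
    = mmul t (mtrans A) B (j0 * (r div kA) + x) (j0' * (w div kB) + y)"
proof -
  define D where "D = block_inner (t div (2 * p)) (r div kA) (w div kB) A B x y"
  define IB where "IB = {..<p} \<times> {..<kB} \<times> {..<(2::nat)}"
  have inner: "(\<Sum>b\<in>IB. D (i, j, l) b *
        (if l = snd (snd b) \<and> i = fst b \<and> j = j0 \<and> fst (snd b) = j0' then 1 else 0))
      = (if j = j0 then D (i, j0, l) (i, j0', l) else 0)" if "i < p" "l < 2" for i j l
  proof -
    have "(\<Sum>b\<in>IB. D (i, j, l) b *
        (if l = snd (snd b) \<and> i = fst b \<and> j = j0 \<and> fst (snd b) = j0' then 1 else 0))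
      = (\<Sum>b\<in>IB. if j = j0 then (if b = (i, j0', l) then D (i, j, l) b else 0) else 0)"
      by (intro sum.cong refl) auto
    then show ?thesis
      using that assms unfolding IB_def by (simp add: sum.delta')
  qed
  have "(\<Sum>a\<in>{..<p} \<times> {..<kA} \<times> {..<2}. \<Sum>b\<in>IB. D a b *
        (if snd (snd a) = snd (snd b) \<and> fst a = fst b \<and> fst (snd a) = j0 \<and> fst (snd b) = j0' then 1 else 0))
      = (\<Sum>i<p. \<Sum>j<kA. \<Sum>l<2. if j = j0 then D (i, j0, l) (i, j0', l) else 0)"
  proof (rule trans[OF sum.cong[OF refl] sum_cartesian_product3[symmetric]])
    fix a :: "nat \<times> nat \<times> nat"
    assume "a \<in> {..<p} \<times> {..<kA} \<times> {..<2}"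
    then obtain i j l where "a = (i, j, l)" "i < p" "l < 2"
      by auto
    then show "(\<Sum>b\<in>IB. D a b *
        (if snd (snd a) = snd (snd b) \<and> fst a = fst b \<and> fst (snd a) = j0 \<and> fst (snd b) = j0' then 1 else 0))
      = (case a of (i, j, l) \<Rightarrow> if j = j0 then D (i, j0, l) (i, j0', l) else 0)"
      using inner by simp
  qed
  also have "\<dots> = (\<Sum>i<p. \<Sum>l<2. D (i, j0, l) (i, j0', l))"
    using assms(1) by (intro sum.cong[OF refl]) (subst sum.swap, simp)
  also have "\<dots> = (\<Sum>i<p. \<Sum>l<2. \<Sum>s<t div (2 * p).
      A ((2 * i + l) * (t div (2 * p)) + s) (j0 * (r div kA) + x) * B ((2 * i + l) * (t div (2 * p)) + s) (j0' * (w div kB) + y))"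
    by (simp add: D_def block_inner_def)
  also have "\<dots> = (\<Sum>s<2 * p * (t div (2 * p)). A s (j0 * (r div kA) + x) * B s (j0' * (w div kB) + y))"
    by (rule sum_row_blocks)
  also have "\<dots> = mmul t (mtrans A) B (j0 * (r div kA) + x) (j0' * (w div kB) + y)"
    unfolding mmul_def mtrans_def using assms(3) by simp
  finally show ?thesis
    unfolding D_def IB_def .
qed

lemma product_entry_eq_out_coeff:
  assumes "0 < p" "0 < kA" "0 < kB" "j0 < kA" "j0' < kB" "t = 2 * p * (t div (2 * p))"
  defines "m0 \<equiv> int j0 * int p + int j0' * int p * int kA"
  shows "mmul t (mtrans A) B (j0 * (r div kA) + x) (j0' * (w div kB) + y)
    = Re (out_coeff p kA kB t r w A B x y (nat (int (p * kA * kB) - 1 + m0))) * (if m0 = 0 then 1 else 2)"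
  unfolding m0_def Re_out_coeff_eq_sum_aligned[OF assms(1-5)] sum_aligned_block_inner[OF assms(4-6)] ..


subsection \<open>Recovery from any \<open>2 p k\<^sub>A k\<^sub>B - 1\<close> workers\<close>

lemma out_coeff_determined:
  fixes i :: "nat \<Rightarrow> nat"
  assumes p: "0 < p" "0 < kA" "0 < kB"
    and inj: "inj_on i {..<2 * p * kA * kB - 1}" and less: "\<And>b. b < 2 * p * kA * kB - 1 \<Longrightarrow> i b < q"
    and eq: "\<And>b. b < 2 * p * kA * kB - 1 \<Longrightarrow>
      worker_out q p kA kB t r w A B (i b) x y = worker_out q p kA kB t r w A' B' (i b) x y"
    and n: "n < 2 * p * kA * kB - 1"
  shows "out_coeff p kA kB t r w A B x y n = out_coeff p kA kB t r w A' B' x y n"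
proof -
  define N where "N = 2 * p * kA * kB - 1"
  define z where "z b = uroot q (int (i b))" for b
  have "i ` {..<N} \<subseteq> {..<q}"
    using less by (auto simp: N_def)
  then have "inj_on (\<lambda>k. uroot q (int k)) (i ` {..<N})"
    by (rule inj_on_subset[OF inj_on_uroot])
  then have "inj_on z {..<N}"
    using comp_inj_on[OF inj[folded N_def]] unfolding z_def o_def by blast
  moreover have "(\<Sum>n<N. (out_coeff p kA kB t r w A B x y n - out_coeff p kA kB t r w A' B' x y n) * z b ^ n) = 0"
    if "b < N" for b
  proof -
    have "(\<Sum>n<N. (out_coeff p kA kB t r w A B x y n - out_coeff p kA kB t r w A' B' x y n) * z b ^ n)
      = (\<Sum>n<N. out_coeff p kA kB t r w A B x y n * uroot q (int (i b) * int n))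
        - (\<Sum>n<N. out_coeff p kA kB t r w A' B' x y n * uroot q (int (i b) * int n))"
      unfolding z_def uroot_power by (simp add: left_diff_distrib sum_subtractf)
    also have "\<dots> = 0"
      unfolding N_def sum_out_coeff_uroot[OF p] using eq that unfolding N_def by simp
    finally show ?thesis .
  qed
  ultimately have "out_coeff p kA kB t r w A B x y n - out_coeff p kA kB t r w A' B' x y n = 0"
    using n unfolding N_def by (rule vandermonde_coeffs_eq_0)
  then show ?thesis
    by simp
qed

lemma worker_outputs_determine_product:
  fixes i :: "nat \<Rightarrow> nat"
  assumes p: "0 < p" "0 < kA" "0 < kB" and dvd: "2 * p dvd t" "kA dvd r" "kB dvd w"
    and inj: "inj_on i {..<2 * p * kA * kB - 1}" and less: "\<And>b. b < 2 * p * kA * kB - 1 \<Longrightarrow> i b < q"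
    and eq: "\<And>b x' y'. b < 2 * p * kA * kB - 1 \<Longrightarrow> x' < r div kA \<Longrightarrow> y' < w div kB \<Longrightarrow>
      worker_out q p kA kB t r w A B (i b) x' y' = worker_out q p kA kB t r w A' B' (i b) x' y'"
    and xy: "x < r" "y < w"
  shows "mmul t (mtrans A) B x y = mmul t (mtrans A') B' x y"
proof -
  define cA cB where "cA = r div kA" and "cB = w div kB"
  have "r = kA * cA" "w = kB * cB"
    using dvd unfolding cA_def cB_def by simp_all
  then have "0 < cA" "0 < cB"
    using xy by (auto intro!: gr0I)
  define j0 x' j0' y' where "j0 = x div cA" "x' = x mod cA" "j0' = y div cB" "y' = y mod cB"
  have x: "x = j0 * cA + x'" "j0 < kA" "x' < cA"
    unfolding j0_x'_j0'_y'_def using xy \<open>r = kA * cA\<close> \<open>0 < cA\<close>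
    by (simp_all add: div_less_iff_less_mult mult.commute)
  have y: "y = j0' * cB + y'" "j0' < kB" "y' < cB"
    unfolding j0_x'_j0'_y'_def using xy \<open>w = kB * cB\<close> \<open>0 < cB\<close>
    by (simp_all add: div_less_iff_less_mult mult.commute)
  define n0 where "n0 = nat (int (p * kA * kB) - 1 + (int j0 * int p + int j0' * int p * int kA))"
  have "t = 2 * p * (t div (2 * p))"
    using dvd by simp
  then have entry: "mmul t (mtrans A'') B'' x y = Re (out_coeff p kA kB t r w A'' B'' x' y' n0)
      * (if int j0 * int p + int j0' * int p * int kA = 0 then 1 else 2)" for A'' B''
    unfolding x(1) y(1) cA_def cB_def n0_def by (rule product_entry_eq_out_coeff[OF p x(2) y(2)])
  have "int j0 * int p + int j0' * int p * int kA \<le> int (p * kA * kB) - 1"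
    using rot_exponent_bounds[of "(0, j0, 0)" p kA "(0, j0', 0)" kB] x(2) y(2) p
    unfolding rot_exponent_def by simp
  then have "n0 < 2 * p * kA * kB - 1"
    using p unfolding n0_def by (simp add: nat_less_iff of_nat_diff mult_ac)
  then have "out_coeff p kA kB t r w A B x' y' n0 = out_coeff p kA kB t r w A' B' x' y' n0"
    using x(3) y(3) unfolding cA_def cB_def by (intro out_coeff_determined[OF p inj less eq])
  then show ?thesis
    unfolding entry by simp
qed

lemma ex_decoder:
  assumes "\<And>A B A' B' x y. f A B = f A' B' \<Longrightarrow> P x y \<Longrightarrow> g A B x y = g A' B' x y"
  shows "\<exists>dec. \<forall>A B x y. P x y \<longrightarrow> g A B x y = dec (f A B) x y"
proof -
  define pick where "pick v = (SOME AB. f (fst AB) (snd AB) = v)" for v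
  have pick: "f (fst (pick (f A B))) (snd (pick (f A B))) = f A B" for A B
    unfolding pick_def by (rule someI[of _ "(A, B)"]) simp
  show ?thesis
  proof (intro exI allI impI)
    fix A B x y
    assume "P x y"
    show "g A B x y = g (fst (pick (f A B))) (snd (pick (f A B))) x y"
      by (rule assms[OF pick[symmetric] \<open>P x y\<close>])
  qed
qed

theorem recovery_threshold:
  fixes i :: "nat \<Rightarrow> nat"
  assumes "0 < p" "0 < kA" "0 < kB" "2 * p dvd t" "kA dvd r" "kB dvd w"
    and inj: "inj_on i {..< 2 * p * kA * kB - 1}" and less: "\<And>b. b < 2 * p * kA * kB - 1 \<Longrightarrow> i b < q"
  shows "\<exists>dec :: (nat \<Rightarrow> nat \<Rightarrow> nat \<Rightarrow> real) \<Rightarrow> nat \<Rightarrow> nat \<Rightarrow> real.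
    \<forall>A B :: nat \<Rightarrow> nat \<Rightarrow> real. \<forall>x<r. \<forall>y<w.
      mmul t (mtrans A) B x y =
      dec (\<lambda>b x' y'. if b < 2 * p * kA * kB - 1 \<and> x' < r div kA \<and> y' < w div kB
                      then worker_out q p kA kB t r w A B (i b) x' y' else 0) x y"
proof -
  define out where "out A B = (\<lambda>b x' y'. if b < 2 * p * kA * kB - 1 \<and> x' < r div kA \<and> y' < w div kB
    then worker_out q p kA kB t r w A B (i b) x' y' else 0)" for A B
  have "\<exists>dec. \<forall>A B x y. x < r \<and> y < w \<longrightarrow> mmul t (mtrans A) B x y = dec (out A B) x y"
  proof (rule ex_decoder)
    fix A B A' B' :: "nat \<Rightarrow> nat \<Rightarrow> real" and x y
    assume out: "out A B = out A' B'" and xy: "x < r \<and> y < w"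
    have eq: "worker_out q p kA kB t r w A B (i b) x' y' = worker_out q p kA kB t r w A' B' (i b) x' y'"
      if "b < 2 * p * kA * kB - 1" "x' < r div kA" "y' < w div kB" for b x' y'
      using fun_cong[OF fun_cong[OF fun_cong[OF out, of b], of x'], of y'] that by (simp add: out_def)
    show "mmul t (mtrans A) B x y = mmul t (mtrans A') B' x y"
      using worker_outputs_determine_product[OF assms(1-6) inj less eq] xy by blast
  qed
  then show ?thesis
    unfolding out_def by blast
qed

theorem theorem5:
  shows
  "(\<forall>(n::nat) (p::nat) (kA::nat) (kB::nat) (q::nat) (t::nat) (r::nat) (w::nat) (i::nat \<Rightarrow> nat).
      0 < p \<and> 0 < kA \<and> 0 < kB \<and> odd q \<and> n \<le> q \<and> 2 * kA * kB * p - 1 < n \<and>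
      2 * p dvd t \<and> kA dvd r \<and> kB dvd w \<and>
      (\<forall>b < 2 * p * kA * kB - 1. i b < n) \<and> inj_on i {..< 2 * p * kA * kB - 1} \<longrightarrow>
      (\<exists>dec :: (nat \<Rightarrow> nat \<Rightarrow> nat \<Rightarrow> real) \<Rightarrow> nat \<Rightarrow> nat \<Rightarrow> real.
        \<forall>A B :: nat \<Rightarrow> nat \<Rightarrow> real. \<forall>x<r. \<forall>y<w.
          mmul t (mtrans A) B x y =
          dec (\<lambda>b x' y'. if b < 2 * p * kA * kB - 1 \<and> x' < r div kA \<and> y' < w div kB
                          then worker_out q p kA kB t r w A B (i b) x' y' else 0) x y))
   \<and>
   (\<exists>C::real. \<forall>(n::nat) (p::nat) (kA::nat) (kB::nat) (q::nat) (i::nat \<Rightarrow> nat).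
      0 < p \<and> 0 < kA \<and> 0 < kB \<and> odd q \<and> n \<le> q \<and> 2 * kA * kB * p - 1 < n \<and>
      (\<forall>b < 2 * p * kA * kB - 1. i b < n) \<and> inj_on i {..< 2 * p * kA * kB - 1} \<longrightarrow>
      cond_num (2 * p * kA * kB - 1) (Gvand q p kA kB i)
        \<le> C * real q powr (real q - real (2 * p * kA * kB - 1) + 5.5))"
  apply (intro conjI allI impI exI[of _ "2::real"])
  subgoal
    by (elim conjE) (rule recovery_threshold; force)
  subgoal
    by (elim conjE) (rule cond_num_Gvand_le; force simp: mult_ac)
  done

end
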